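(* Let $\lambda_1\ge\lambda_2\ge2$ and $h_1\ge h_2\ge 2$ be integers and let $\lambda=(\lambda_1,\lambda_2,2^{h_2-2},1^{h_1-h_2})$, a partition of $n=\lambda_1+\lambda_2+h_1+h_2-4$. If $m=h_1$ or $m=n-(\lambda_1-1)$, then $$|\mathrm{QYT}_{=m}(\lambda)|=\frac{\lambda_1-\lambda_2+1}{m-h_2+1}\binom{\lambda_1+h_1-2}{m-h_2}\binom{\lambda_2+h_1-3}{m-h_2}\binom{m-h_2}{m-h_1}\binom{\lambda_2+h_2-4}{h_2-2}\binom{\lambda_1+h_2-3}{h_2-2}\frac{1}{\binom{h_1-1}{h_2-2}}.$$
   Context: The notation $(\lambda_1,\lambda_2,2^{h_2-2},1^{h_1-h_2})$ denotes the partition with rows of lengths $\lambda_1,\lambda_2$, followed by $h_2-2$ rows of length $2$, followed by $h_1-h_2$ rows of length $1$; its first column has height $h_1$ and its second column height $h_2$. The (French) Young diagram has $\lambda_j$ left-justified boxes in row $j$, rows numbered from bottom to top. A semistandard Young tableau (SSYT) of shape $\lambda$ is a filling of the boxes with positive integers weakly increasing left to right along rows and strictly increasing bottom to top along columns. An SSYT $T$ is quasi-Yamanouchi if for every integer $i>1$ appearing in $T$, the leftmost occurrence of $i$ lies in a column weakly left of (column index $\le$) some occurrence of $i-1$. $\mathrm{QYT}_{=m}(\lambda)$ is the set of quasi-Yamanouchi tableaux of shape $\lambda$ whose largest entry is exactly $m$. *)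

theory Defs
  imports Complex_Main
begin

text \<open>A partition is a list of row lengths (row 0 is the bottom row, French convention).
  Boxes are pairs (row, column), both 0-indexed.\<close>

definition boxes :: "nat list \<Rightarrow> (nat \<times> nat) set" where
  "boxes lam = {(j, c). j < length lam \<and> c < lam ! j}"

definition is_SSYT :: "nat list \<Rightarrow> (nat \<times> nat \<Rightarrow> nat) \<Rightarrow> bool" where
  "is_SSYT lam T \<longleftrightarrow>
     (\<forall>b. b \<notin> boxes lam \<longrightarrow> T b = 0) \<and>
     (\<forall>b\<in>boxes lam. 1 \<le> T b) \<and>
     (\<forall>j c. (j, c) \<in> boxes lam \<and> (j, Suc c) \<in> boxes lam \<longrightarrow> T (j, c) \<le> T (j, Suc c)) \<and>
     (\<forall>j c. (j, c) \<in> boxes lam \<and> (Suc j, c) \<in> boxes lam \<longrightarrow> T (j, c) < T (Suc j, c))"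

definition leftmost_col :: "nat list \<Rightarrow> (nat \<times> nat \<Rightarrow> nat) \<Rightarrow> nat \<Rightarrow> nat" where
  "leftmost_col lam T i = Min {c. \<exists>j. (j, c) \<in> boxes lam \<and> T (j, c) = i}"

definition quasi_yamanouchi :: "nat list \<Rightarrow> (nat \<times> nat \<Rightarrow> nat) \<Rightarrow> bool" where
  "quasi_yamanouchi lam T \<longleftrightarrow>
     (\<forall>i. 1 < i \<and> i \<in> T ` boxes lam \<longrightarrow>
        (\<exists>j c. (j, c) \<in> boxes lam \<and> T (j, c) = i - 1 \<and> leftmost_col lam T i \<le> c))"

definition QYT_eq :: "nat \<Rightarrow> nat list \<Rightarrow> (nat \<times> nat \<Rightarrow> nat) set" where
  "QYT_eq m lam = {T. is_SSYT lam T \<and> quasi_yamanouchi lam T \<and> Max (T ` boxes lam) = m}"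

definition hook_shape :: "nat \<Rightarrow> nat \<Rightarrow> nat \<Rightarrow> nat \<Rightarrow> nat list" where
  "hook_shape l1 l2 h1 h2 = [l1, l2] @ replicate (h2 - 2) 2 @ replicate (h1 - h2) 1"

end

theory Submission
  imports Defs "HOL-Library.Multiset"
begin

text \<open>Both extreme values of \<open>m\<close> are counted by bijections onto the same kind of triples
  \<open>(u, v, w)\<close>: a weakly increasing row \<open>u\<close> under a weakly increasing row \<open>v\<close>, column
  strictly, and a strictly increasing column \<open>w\<close> rising above the first entry of \<open>v\<close>.

  For \<open>m = h1\<close> the first column is forced to be \<open>1, \<dots>, h1\<close>, which makes the tableau
  quasi-Yamanouchi, and the triple consists of the remaining entries of the two bottom rows and of
  the second column. For \<open>m = n - (l1 - 1)\<close> every value \<open>2, \<dots>, m\<close> occurs exactly once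
  above the bottom row, and the quasi-Yamanouchi condition puts a bottom-row entry between any two
  such values increasing to the right. Hence the tableau is determined by the ranks of its upper
  entries among the bottom row; these form a triple of the same kind with rows and columns
  exchanged.

  The triples are counted by Lindstrom--Gessel--Viennot switching: exchanging tails at the first
  violation matches the pairs of rows that are not column strict with pairs of rows of lengths
  shifted by one, and the hooks \<open>(v, w)\<close> are counted by a hockey-stick summation.\<close>

section \<open>Counting increasing lists\<close>

definition sorted_lists :: "nat \<Rightarrow> nat set \<Rightarrow> nat list set" where
  "sorted_lists s A = {xs. length xs = s \<and> sorted xs \<and> set xs \<subseteq> A}"

definition strict_lists :: "nat \<Rightarrow> nat set \<Rightarrow> nat list set" where
  "strict_lists k A = {xs. length xs = k \<and> sorted_wrt (<) xs \<and> set xs \<subseteq> A}"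

lemma finite_sorted_lists: "finite A \<Longrightarrow> finite (sorted_lists s A)"
  by (rule finite_subset[OF _ finite_lists_length_eq[of A s]]) (auto simp: sorted_lists_def)

lemma finite_strict_lists: "finite A \<Longrightarrow> finite (strict_lists k A)"
  by (rule finite_subset[OF _ finite_lists_length_eq[of A k]]) (auto simp: strict_lists_def)

lemma card_sorted_lists:
  assumes "finite A"
  shows "card (sorted_lists s A) = (card A + s - 1) choose s"
proof -
  have "bij_betw mset (sorted_lists s A) (multisets_of_size A s)"
  proof (rule bij_betw_byWitness[where f' = sorted_list_of_multiset])
    show "\<forall>xs\<in>sorted_lists s A. sorted_list_of_multiset (mset xs) = xs"
      by (auto simp: sorted_lists_def sorted_sort_id)
    show "\<forall>M\<in>multisets_of_size A s. mset (sorted_list_of_multiset M) = M" by simp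
    show "mset ` sorted_lists s A \<subseteq> multisets_of_size A s"
      by (auto simp: sorted_lists_def multisets_of_size_def)
    show "sorted_list_of_multiset ` multisets_of_size A s \<subseteq> sorted_lists s A"
      by (auto simp: sorted_lists_def multisets_of_size_def
          simp flip: set_mset_mset size_mset)
  qed
  then show ?thesis using card_multisets_of_size[OF assms] bij_betw_same_card by metis
qed

lemma card_strict_lists:
  assumes "finite A"
  shows "card (strict_lists k A) = card A choose k"
proof -
  have "bij_betw set (strict_lists k A) {B. B \<subseteq> A \<and> card B = k}"
  proof (rule bij_betw_byWitness[where f' = sorted_list_of_set])
    show "\<forall>xs\<in>strict_lists k A. sorted_list_of_set (set xs) = xs"
      by (auto simp: strict_lists_def sorted_list_of_set.idem_if_sorted_distinct strict_sorted_iff)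
    show "\<forall>B\<in>{B. B \<subseteq> A \<and> card B = k}. set (sorted_list_of_set B) = B"
      using assms by (metis (mono_tags) mem_Collect_eq rev_finite_subset set_sorted_list_of_set)
    show "set ` strict_lists k A \<subseteq> {B. B \<subseteq> A \<and> card B = k}"
      by (auto simp: strict_lists_def strict_sorted_iff distinct_card)
    show "sorted_list_of_set ` {B. B \<subseteq> A \<and> card B = k} \<subseteq> strict_lists k A"
    proof
      fix xs assume "xs \<in> sorted_list_of_set ` {B. B \<subseteq> A \<and> card B = k}"
      then obtain B where "B \<subseteq> A" "card B = k" "xs = sorted_list_of_set B" by auto
      moreover have "finite B" using \<open>B \<subseteq> A\<close> assms rev_finite_subset by auto
      ultimately show "xs \<in> strict_lists k A" by (auto simp: strict_lists_def)
    qed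
  qed
  then show ?thesis using n_subsets[OF assms] bij_betw_same_card by metis
qed

definition hook_pairs :: "nat \<Rightarrow> nat \<Rightarrow> nat \<Rightarrow> (nat list \<times> nat list) set" where
  "hook_pairs r k N = {(v, w). v \<in> sorted_lists r {1..N} \<and> w \<in> strict_lists k {1..N}
     \<and> (\<forall>y\<in>set w. hd v < y)}"

lemma finite_hook_pairs: "finite (hook_pairs r k N)"
  by (rule finite_subset[of _ "sorted_lists r {1..N} \<times> strict_lists k {1..N}"])
    (auto simp: hook_pairs_def finite_sorted_lists finite_strict_lists)

lemma hook_pairs_Suc_eq_image:
  "hook_pairs (Suc r) k N =
     (\<lambda>(x, v, w). (x # v, w)) ` (SIGMA x:{1..N}. sorted_lists r {x..N} \<times> strict_lists k {x<..N})"
proof (rule set_eqI, rule iffI)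
  fix p assume "p \<in> hook_pairs (Suc r) k N"
  then obtain x v w where p: "p = (x # v, w)" "x # v \<in> sorted_lists (Suc r) {1..N}"
    "w \<in> strict_lists k {1..N}" "\<forall>y\<in>set w. x < y"
    unfolding hook_pairs_def sorted_lists_def by (cases p; cases "fst p") auto
  then have "x \<in> {1..N}" "v \<in> sorted_lists r {x..N}" "w \<in> strict_lists k {x<..N}"
    by (auto simp: sorted_lists_def strict_lists_def)
  with p(1) show "p \<in> (\<lambda>(x, v, w). (x # v, w)) ` (SIGMA x:{1..N}. sorted_lists r {x..N} \<times> strict_lists k {x<..N})"
    by force
qed (fastforce simp: hook_pairs_def sorted_lists_def strict_lists_def)

lemma trinomial_revision:
  "((y + r) choose r) * (y choose k) = ((r + k) choose k) * ((y + r) choose (r + k))"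
proof (cases "k \<le> y")
  case True
  have "((y + r) choose y) * (y choose k) = ((y + r) choose k) * ((y + r - k) choose (y - k))"
    using choose_mult[of k y "y + r"] True by simp
  moreover have "((y + r) choose (r + k)) * ((r + k) choose k) = ((y + r) choose k) * ((y + r - k) choose r)"
    using choose_mult[of k "r + k" "y + r"] True by simp
  moreover have "(y + r) choose y = (y + r) choose r"
    using binomial_symmetric[of y "y + r"] by simp
  moreover have "(y + r - k) choose (y - k) = (y + r - k) choose r"
    using binomial_symmetric[of "y - k" "y + r - k"] True by simp
  ultimately show ?thesis by (simp add: mult.commute)
qed (simp add: binomial_eq_0)

lemma sum_choose_mult_choose:
  "(\<Sum>y<N. ((y + r) choose r) * (y choose k)) = ((r + k) choose k) * ((N + r) choose Suc (r + k))"
proof (induction N)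
  case (Suc N)
  then show ?case using trinomial_revision[of N r k] by (simp add: algebra_simps)
qed simp

lemma card_hook_pairs:
  "card (hook_pairs (Suc r) k N) = ((r + k) choose k) * ((N + r) choose Suc (r + k))"
proof -
  have inj: "inj_on (\<lambda>(x, v, w). (x # v, w)) (SIGMA x:{1..N}. sorted_lists r {x..N} \<times> strict_lists k {x<..N})"
    by (auto simp: inj_on_def)
  have "card (hook_pairs (Suc r) k N)
      = card (SIGMA x:{1..N}. sorted_lists r {x..N} \<times> strict_lists k {x<..N})"
    unfolding hook_pairs_Suc_eq_image using card_image[OF inj] .
  also have "\<dots> = (\<Sum>x\<in>{1..N}. card (sorted_lists r {x..N}) * card (strict_lists k {x<..N}))"
    by (simp add: card_cartesian_product finite_sorted_lists finite_strict_lists)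
  also have "\<dots> = (\<Sum>x\<in>{1..N}. ((N - x + r) choose r) * ((N - x) choose k))"
    by (rule sum.cong) (auto simp: card_sorted_lists card_strict_lists Suc_diff_le)
  also have "\<dots> = (\<Sum>y<N. ((y + r) choose r) * (y choose k))"
    by (rule sum.reindex_bij_witness[where i = "\<lambda>y. N - y" and j = "\<lambda>x. N - x"]) auto
  also have "\<dots> = ((r + k) choose k) * ((N + r) choose Suc (r + k))"
    by (rule sum_choose_mult_choose)
  finally show ?thesis .
qed

lemma increasing_nat_gap:
  fixes f :: "nat \<Rightarrow> nat"
  assumes "\<And>i. Suc i < n \<Longrightarrow> f i < f (Suc i)" "i \<le> j" "j < n"
  shows "f i + (j - i) \<le> f j"
  using assms(2,3)
proof (induction j)
  case (Suc j)
  then show ?case using assms(1)[of j] by (cases "i = Suc j") (auto simp: Suc_diff_le)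
qed simp

lemma sorted_wrt_less_nth_gap:
  "sorted_wrt (<) (w :: nat list) \<Longrightarrow> i < length w \<Longrightarrow> w ! 0 + i \<le> w ! i"
  using increasing_nat_gap[of "length w" "(!) w" 0 i] by (simp add: sorted_wrt_nth_less)

section \<open>Column-strict pairs of rows\<close>

definition column_strict :: "nat list \<Rightarrow> nat list \<Rightarrow> bool" where
  "column_strict u v \<longleftrightarrow> length v \<le> length u \<and> (\<forall>i<length v. u ! i < v ! i)"

lemma column_strict_Nil [simp]: "column_strict u []"
  and column_strict_Nil_Cons [simp]: "\<not> column_strict [] (y # ys)"
  and column_strict_Cons_Cons [simp]: "column_strict (x # xs) (y # ys) \<longleftrightarrow> x < y \<and> column_strict xs ys"
  by (auto simp: column_strict_def nth_Cons' less_Suc_eq_0_disj)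

text \<open>Lindstrom--Gessel--Viennot switching: exchange the tails of the two rows at the
  first column violating column strictness.\<close>
fun tail_switch :: "nat list \<Rightarrow> nat list \<Rightarrow> nat list \<times> nat list" where
  "tail_switch (x # xs) (y # ys) =
     (if y \<le> x then (ys, y # x # xs) else (case tail_switch xs ys of (q, p) \<Rightarrow> (x # q, y # p)))"
| "tail_switch [] (y # ys) = (ys, [y])"
| "tail_switch xs [] = ([], [])"

lemma tail_switch_length:
  "\<not> column_strict x y \<Longrightarrow>
   length (fst (tail_switch x y)) = length y - 1 \<and> length (snd (tail_switch x y)) = length x + 1"
proof (induction x y rule: tail_switch.induct)
  case (1 x xs y ys)
  then show ?case by (cases ys) (auto split: prod.splits)
qed simp_all

lemma hd_tail_switch: "y \<noteq> [] \<Longrightarrow> hd (snd (tail_switch x y)) = hd y"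
  by (cases "(x, y)" rule: tail_switch.cases) (auto split: prod.splits)

lemma set_tail_switch:
  "set (fst (tail_switch x y)) \<union> set (snd (tail_switch x y)) \<subseteq> set x \<union> set y"
  by (induction x y rule: tail_switch.induct) (auto split: prod.splits)

lemma sorted_tail_switch:
  "\<not> column_strict x y \<Longrightarrow> sorted x \<Longrightarrow> sorted y \<Longrightarrow>
   sorted (fst (tail_switch x y)) \<and> sorted (snd (tail_switch x y))"
proof (induction x y rule: tail_switch.induct)
  case (1 x xs y ys)
  show ?case
  proof (cases "y \<le> x")
    case True
    then show ?thesis using "1.prems" by (auto intro: order_trans)
  next
    case False
    obtain q p where qp: "tail_switch xs ys = (q, p)" by fastforce
    have ys: "ys \<noteq> []" and bad: "\<not> column_strict xs ys" using "1.prems" False by auto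
    have IH: "sorted q \<and> sorted p" using "1.IH"[OF False bad] "1.prems" qp by simp
    have "set q \<subseteq> set xs \<union> set ys" using set_tail_switch[of xs ys] qp by auto
    moreover have "\<forall>z\<in>set xs \<union> set ys. x \<le> z" using "1.prems" False by auto
    ultimately have "sorted (x # q)" using IH by auto
    moreover have "hd p = hd ys" using hd_tail_switch[OF ys, of xs] qp by simp
    then have "sorted (y # p)" using IH ys "1.prems" by (cases p; cases ys) auto
    ultimately show ?thesis using False qp by simp
  qed
qed simp_all

lemma tail_switch_involution:
  "\<not> column_strict x y \<Longrightarrow> sorted y \<Longrightarrow>
   tail_switch (fst (tail_switch x y)) (snd (tail_switch x y)) = (x, y)"
proof (induction x y rule: tail_switch.induct)
  case (1 x xs y ys)
  then show ?case by (cases ys) (auto split: prod.splits)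
next
  case (2 y ys)
  then show ?case by (cases ys) auto
qed simp

lemma tail_switch_not_column_strict:
  "sorted y \<Longrightarrow> length x + 2 \<le> length y \<Longrightarrow>
   \<not> column_strict (fst (tail_switch x y)) (snd (tail_switch x y))"
proof (induction x y rule: tail_switch.induct)
  case (1 x xs y ys)
  then show ?case by (cases ys) (auto split: prod.splits)
next
  case (2 y ys)
  then show ?case by (cases ys) auto
qed simp

definition compatible_triples :: "nat \<Rightarrow> nat \<Rightarrow> nat \<Rightarrow> nat \<Rightarrow> (nat list \<times> nat list \<times> nat list) set" where
  "compatible_triples a b k N =
     {(u, v, w). u \<in> sorted_lists a {1..N} \<and> (v, w) \<in> hook_pairs b k N \<and> column_strict u v}"

definition switch_triple :: "nat list \<times> nat list \<times> nat list \<Rightarrow> nat list \<times> nat list \<times> nat list" where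
  "switch_triple = (\<lambda>(u, v, w). (fst (tail_switch u v), snd (tail_switch u v), w))"

lemma switch_triple_involution:
  "\<not> column_strict u v \<Longrightarrow> sorted v \<Longrightarrow> switch_triple (switch_triple (u, v, w)) = (u, v, w)"
  using tail_switch_involution by (simp add: switch_triple_def)

definition crossing_triples :: "nat \<Rightarrow> nat \<Rightarrow> nat \<Rightarrow> nat \<Rightarrow> (nat list \<times> nat list \<times> nat list) set" where
  "crossing_triples a b k N =
     {(u, v, w). u \<in> sorted_lists a {1..N} \<and> (v, w) \<in> hook_pairs b k N \<and> \<not> column_strict u v}"

lemma switch_crossing_triple:
  assumes "1 \<le> b" "t \<in> crossing_triples a b k N"
  shows "switch_triple t \<in> sorted_lists (b - 1) {1..N} \<times> hook_pairs (a + 1) k N"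
proof -
  obtain u v w where t: "t = (u, v, w)" and u: "u \<in> sorted_lists a {1..N}"
    and vw: "(v, w) \<in> hook_pairs b k N" and bad: "\<not> column_strict u v"
    using assms(2) by (auto simp: crossing_triples_def)
  have "v \<noteq> []" using vw assms(1) by (auto simp: hook_pairs_def sorted_lists_def)
  moreover have "set u \<union> set v \<subseteq> {1..N}" "sorted u" "sorted v"
    using u vw by (auto simp: hook_pairs_def sorted_lists_def)
  ultimately show ?thesis
    unfolding t using u vw tail_switch_length[OF bad] sorted_tail_switch[OF bad] hd_tail_switch[of v u]
      set_tail_switch[of u v]
    by (auto simp: switch_triple_def sorted_lists_def hook_pairs_def)
qed

lemma switch_to_crossing_triple:
  assumes "b \<le> a" "1 \<le> b" "t \<in> sorted_lists (b - 1) {1..N} \<times> hook_pairs (a + 1) k N"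
  shows "switch_triple t \<in> crossing_triples a b k N \<and> switch_triple (switch_triple t) = t"
proof -
  obtain q p w where t: "t = (q, p, w)" and q: "q \<in> sorted_lists (b - 1) {1..N}"
    and pw: "(p, w) \<in> hook_pairs (a + 1) k N" using assms(3) by auto
  have p: "p \<noteq> []" "sorted p" "sorted q" "length q + 2 \<le> length p" "set q \<union> set p \<subseteq> {1..N}"
    using q pw assms(1,2) by (auto simp: hook_pairs_def sorted_lists_def)
  then have bad: "\<not> column_strict q p" by (auto simp: column_strict_def)
  then show ?thesis
    unfolding t using p q pw assms(1,2) tail_switch_length[OF bad] sorted_tail_switch[OF bad]
      hd_tail_switch[of p q] set_tail_switch[of q p] tail_switch_not_column_strict[OF p(2,4)]
      switch_triple_involution[OF bad p(2)]
    by (auto simp: switch_triple_def crossing_triples_def sorted_lists_def hook_pairs_def)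
qed

lemma bij_betw_switch_triple:
  assumes "b \<le> a" "1 \<le> b"
  shows "bij_betw switch_triple (crossing_triples a b k N)
    (sorted_lists (b - 1) {1..N} \<times> hook_pairs (a + 1) k N)"
proof (rule bij_betw_byWitness[where f' = switch_triple])
  show "\<forall>t\<in>crossing_triples a b k N. switch_triple (switch_triple t) = t"
    by (auto simp: crossing_triples_def hook_pairs_def sorted_lists_def switch_triple_involution)
  show "\<forall>t\<in>sorted_lists (b - 1) {1..N} \<times> hook_pairs (a + 1) k N. switch_triple (switch_triple t) = t"
    using switch_to_crossing_triple[OF assms] by blast
  show "switch_triple ` crossing_triples a b k N \<subseteq> sorted_lists (b - 1) {1..N} \<times> hook_pairs (a + 1) k N"
    using switch_crossing_triple[OF assms(2)] by blast
  show "switch_triple ` (sorted_lists (b - 1) {1..N} \<times> hook_pairs (a + 1) k N) \<subseteq> crossing_triples a b k N"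
    using switch_to_crossing_triple[OF assms] by blast
qed

lemma card_compatible_triples:
  assumes "b \<le> a" "1 \<le> b"
  shows "card (compatible_triples a b k N) + card (sorted_lists (b - 1) {1..N}) * card (hook_pairs (a + 1) k N)
    = card (sorted_lists a {1..N}) * card (hook_pairs b k N)"
proof -
  have U: "sorted_lists a {1..N} \<times> hook_pairs b k N = compatible_triples a b k N \<union> crossing_triples a b k N"
    and D: "compatible_triples a b k N \<inter> crossing_triples a b k N = {}"
    by (auto simp: compatible_triples_def crossing_triples_def)
  have "finite (sorted_lists a {1..N} \<times> hook_pairs b k N)"
    by (simp add: finite_sorted_lists finite_hook_pairs)
  then have "card (compatible_triples a b k N) + card (crossing_triples a b k N)
      = card (sorted_lists a {1..N} \<times> hook_pairs b k N)"
    unfolding U using D by (simp add: card_Un_disjoint)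
  moreover have "card (crossing_triples a b k N) = card (sorted_lists (b - 1) {1..N}) * card (hook_pairs (a + 1) k N)"
    using bij_betw_same_card[OF bij_betw_switch_triple[OF assms]] by (simp add: card_cartesian_product)
  ultimately show ?thesis by (simp add: card_cartesian_product)
qed

section \<open>Closed forms\<close>

lemma real_binomial_fact: "r \<le> n \<Longrightarrow> real (n choose r) = fact n / (fact r * fact (n - r))"
  by (rule binomial_fact)

definition triple_count :: "nat \<Rightarrow> nat \<Rightarrow> nat \<Rightarrow> nat \<Rightarrow> real" where
  "triple_count a b k N =
     (real a - real b) * (real N - real k - 1) / ((real b + real k + 1) * (real a + real k + 1))
     * (fact (N + a - 1) * fact (N + b - 1) / (fact a * fact b * fact (N - 1) * fact k * fact (N - k - 1)))"

lemma real_card_compatible_triples: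
  assumes "Suc b \<le> a" "k + 2 \<le> N"
  shows "real (card (compatible_triples a (Suc b) k N)) = triple_count a b k N"
proof -
  obtain M where N: "N = Suc M" using assms by (cases N) auto
  have kM: "k < M" using assms N by simp
  have sorted_a: "real (card (sorted_lists a {1..N})) = fact (M + a) / (fact a * fact M)"
    and sorted_b: "real (card (sorted_lists b {1..N})) = fact (M + b) / (fact b * fact M)"
    by (simp_all add: N card_sorted_lists real_binomial_fact)
  \<comment> \<open>\<open>s\<close> and \<open>t\<close> are kept as atoms, so that \<open>field_simps\<close> can clear them as denominators\<close>
  have hook: "real (card (hook_pairs (Suc r) k N)) = t * fact (M + r) / (s * fact k * fact r * fact (M - k))"
    if "s = real r + real k + 1" "t = real M + real r + 1" for r s t
  proof -
    have "s \<noteq> 0" using that(1) by simp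
    have big: "real ((N + r) choose Suc (r + k)) = t * fact (M + r) / (s * fact (r + k) * fact (M - k))"
      using real_binomial_fact[of "Suc (r + k)" "N + r"] kM N that by (simp add: algebra_simps)
    have small: "real ((r + k) choose k) = fact (r + k) / (fact k * fact r)"
      using real_binomial_fact[of k "r + k"] by simp
    show ?thesis unfolding card_hook_pairs of_nat_mult big small
      using \<open>s \<noteq> 0\<close> by (simp add: field_simps)
  qed
  have "real (card (compatible_triples a (Suc b) k N))
     = real (card (sorted_lists a {1..N})) * real (card (hook_pairs (Suc b) k N))
       - real (card (sorted_lists b {1..N})) * real (card (hook_pairs (Suc a) k N))"
    using card_compatible_triples[of "Suc b" a k N] assms
    by (simp flip: of_nat_mult of_nat_add)
  also have "\<dots> = triple_count a b k N"
  proof -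
    define p q where "p = real b + real k + 1" and "q = real a + real k + 1"
    have pq: "p \<noteq> 0" "q \<noteq> 0" by (simp_all add: p_def q_def)
    have "p + real M - real k = real M + real b + 1" "q + real M - real k = real M + real a + 1"
      by (simp_all add: p_def q_def)
    note hook_b = hook[OF p_def this(1)] and hook_a = hook[OF q_def this(2)]
    have count: "triple_count a b k N = (q - p) * (real M - real k) / (p * q)
        * (fact (M + a) * fact (M + b) / (fact a * fact b * fact M * fact k * fact (M - k)))"
      by (simp add: triple_count_def N p_def q_def)
    show ?thesis
      unfolding sorted_a sorted_b hook_b hook_a count using pq by (simp add: field_simps)
  qed
  finally show ?thesis .
qed

definition hook_QYT_formula :: "nat \<Rightarrow> nat \<Rightarrow> nat \<Rightarrow> nat \<Rightarrow> nat \<Rightarrow> real" where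
  "hook_QYT_formula l1 l2 h1 h2 m =
    (real (l1 - l2 + 1) / real (m - h2 + 1))
    * real ((l1 + h1 - 2) choose (m - h2))
    * real ((l2 + h1 - 3) choose (m - h2))
    * real ((m - h2) choose (m - h1))
    * real ((l2 + h2 - 4) choose (h2 - 2))
    * real ((l1 + h2 - 3) choose (h2 - 2))
    * (1 / real ((h1 - 1) choose (h2 - 2)))"

lemma triple_count_eq_formula_first_column:
  assumes "l2 \<le> l1" "2 \<le> l2" "h2 \<le> h1" "2 \<le> h2"
  shows "triple_count (l1 - 1) (l2 - 2) (h2 - 2) h1 = hook_QYT_formula l1 l2 h1 h2 h1"
proof -
  define a b k d where "a = l1 - 1" and "b = l2 - 2" and "k = h2 - 2" and "d = h1 - h2"
  define p q e where "p = real b + real k + 1" and "q = real a + real k + 1" and "e = real d + 1"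
  have pqe: "p \<noteq> 0" "q \<noteq> 0" "e \<noteq> 0" by (simp_all add: p_def q_def e_def)
  have "b < a" using assms by (simp add: a_def b_def)
  have h1: "h1 = k + d + 2" using assms by (simp add: k_def d_def)
  have formula: "hook_QYT_formula l1 l2 h1 h2 h1 = real (a - b) / e
      * real ((a + k + d + 1) choose d) * real ((b + k + d + 1) choose d)
      * real ((b + k) choose k) * real ((a + k) choose k) * (1 / real ((k + d + 1) choose k))"
  proof -
    have "l1 - l2 + 1 = a - b" "h1 - h2 + 1 = d + 1" "l1 + h1 - 2 = a + k + d + 1" "h1 - h2 = d"
      "l2 + h1 - 3 = b + k + d + 1" "h1 - h1 = 0" "l2 + h2 - 4 = b + k" "h2 - 2 = k"
      "l1 + h2 - 3 = a + k" "h1 - 1 = k + d + 1"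
      using assms by (simp_all add: a_def b_def k_def d_def)
    then show ?thesis by (simp add: hook_QYT_formula_def e_def)
  qed
  have count: "triple_count a b k h1 = (real a - real b) * e / (p * q)
      * (fact (a + k + d + 1) * fact (b + k + d + 1) / (fact a * fact b * fact (k + d + 1) * fact k * (e * fact d)))"
    by (simp add: triple_count_def h1 p_def q_def e_def algebra_simps)
  have c1: "real ((a + k + d + 1) choose d) = fact (a + k + d + 1) / (fact d * (q * fact (a + k)))"
    using real_binomial_fact[of d "a + k + d + 1"] by (simp add: q_def algebra_simps)
  have c2: "real ((b + k + d + 1) choose d) = fact (b + k + d + 1) / (fact d * (p * fact (b + k)))"
    using real_binomial_fact[of d "b + k + d + 1"] by (simp add: p_def algebra_simps)
  have c3: "real ((b + k) choose k) = fact (b + k) / (fact k * fact b)"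
    using real_binomial_fact[of k "b + k"] by simp
  have c4: "real ((a + k) choose k) = fact (a + k) / (fact k * fact a)"
    using real_binomial_fact[of k "a + k"] by simp
  have c5: "real ((k + d + 1) choose k) = fact (k + d + 1) / (fact k * (e * fact d))"
    using real_binomial_fact[of k "k + d + 1"] by (simp add: e_def algebra_simps)
  have ab: "real (a - b) = real a - real b" using \<open>b < a\<close> by simp
  show ?thesis
    unfolding formula a_def[symmetric] b_def[symmetric] k_def[symmetric]
    unfolding count c1 c2 c3 c4 c5 ab using pqe by (simp add: field_simps del: fact_Suc)
qed

lemma triple_count_eq_formula_max:
  assumes "l2 \<le> l1" "2 \<le> l2" "h2 \<le> h1" "2 \<le> h2"
  shows "triple_count (h1 - 1) (h2 - 2) (l2 - 2) l1 = hook_QYT_formula l1 l2 h1 h2 (l2 + h1 + h2 - 3)"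
proof -
  define a b k d where "a = h1 - 1" and "b = h2 - 2" and "k = l2 - 2" and "d = l1 - l2"
  have "b < a" using assms by (simp add: a_def b_def)
  then obtain f where "a = Suc (b + f)" using less_imp_Suc_add by blast
  then have f: "a = b + f + 1" by simp
  define p q e g where "p = real b + real k + 1" and "q = real a + real k + 1" and "e = real d + 1"
    and "g = real f + 1"
  have pqeg: "p \<noteq> 0" "q \<noteq> 0" "e \<noteq> 0" "g \<noteq> 0" by (simp_all add: p_def q_def e_def g_def)
  have l1: "l1 = k + d + 2" using assms by (simp add: k_def d_def)
  have formula: "hook_QYT_formula l1 l2 h1 h2 (l2 + h1 + h2 - 3) = e / q
      * real ((k + d + a + 1) choose (a + k)) * real ((a + k) choose (b + k + 1))
      * real ((k + b) choose b) * real ((k + d + b + 1) choose b) * (1 / real (a choose b))"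
  proof -
    have "l1 - l2 + 1 = d + 1" "l2 + h1 + h2 - 3 - h2 + 1 = a + k + 1" "l1 + h1 - 2 = k + d + a + 1"
      "l2 + h1 + h2 - 3 - h2 = a + k" "l2 + h1 - 3 = a + k" "l2 + h1 + h2 - 3 - h1 = b + k + 1"
      "l2 + h2 - 4 = k + b" "h2 - 2 = b" "l1 + h2 - 3 = k + d + b + 1" "h1 - 1 = a"
      using assms by (simp_all add: a_def b_def k_def d_def)
    then show ?thesis by (simp add: hook_QYT_formula_def e_def q_def add.commute)
  qed
  have count: "triple_count a b k l1 = g * e / (p * q)
      * (fact (a + k + d + 1) * fact (b + k + d + 1) / (fact a * fact b * fact (k + d + 1) * fact k * (e * fact d)))"
    by (simp add: triple_count_def l1 f p_def q_def e_def g_def algebra_simps)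
  have c1: "real ((k + d + a + 1) choose (a + k)) = fact (a + k + d + 1) / (fact (a + k) * (e * fact d))"
    using real_binomial_fact[of "a + k" "k + d + a + 1"] by (simp add: e_def algebra_simps)
  have c2: "real ((a + k) choose (b + k + 1)) = fact (a + k) / ((p * fact (b + k)) * fact f)"
    using real_binomial_fact[of "b + k + 1" "a + k"] by (simp add: f p_def algebra_simps)
  have c3: "real ((k + b) choose b) = fact (b + k) / (fact b * fact k)"
    using real_binomial_fact[of b "k + b"] by (simp add: add.commute)
  have c4: "real ((k + d + b + 1) choose b) = fact (b + k + d + 1) / (fact b * fact (k + d + 1))"
    using real_binomial_fact[of b "k + d + b + 1"] by (simp add: algebra_simps)
  have c5: "real (a choose b) = fact a / (fact b * (g * fact f))"
    using real_binomial_fact[of b a] by (simp add: f g_def algebra_simps)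
  show ?thesis
    unfolding formula a_def[symmetric] b_def[symmetric] k_def[symmetric]
    unfolding count c1 c2 c3 c4 c5 using pqeg by (simp add: field_simps del: fact_Suc)
qed

section \<open>Semistandard and quasi-Yamanouchi tableaux\<close>

lemma boxes_row_closed: "(j, c') \<in> boxes lam \<Longrightarrow> c \<le> c' \<Longrightarrow> (j, c) \<in> boxes lam"
  by (auto simp: boxes_def)

lemma boxes_column_closed:
  "sorted_wrt (\<ge>) lam \<Longrightarrow> (j', c) \<in> boxes lam \<Longrightarrow> j \<le> j' \<Longrightarrow> (j, c) \<in> boxes lam"
  unfolding boxes_def using sorted_wrt_nth_less[of "(\<ge>)" lam j j']
  by (cases "j = j'") auto

lemma finite_boxes: "finite (boxes lam)"
proof (rule finite_subset)
  show "boxes lam \<subseteq> {..<length lam} \<times> {..<Max (set lam) + 1}"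
  proof
    fix x assume "x \<in> boxes lam"
    then obtain j c where x: "x = (j, c)" "j < length lam" "c < lam ! j" by (auto simp: boxes_def)
    have "lam ! j \<le> Max (set lam)" using x(2) by (auto intro: Max_ge)
    then have "c < Max (set lam) + 1" using x(3) by linarith
    then show "x \<in> {..<length lam} \<times> {..<Max (set lam) + 1}" using x by simp
  qed
qed simp

lemma SSYT_row_mono:
  assumes "is_SSYT lam T" "(j, c') \<in> boxes lam" "c \<le> c'"
  shows "T (j, c) \<le> T (j, c')"
  using assms(2,3)
proof (induction c' arbitrary: c)
  case (Suc c')
  show ?case
  proof (cases "c = Suc c'")
    case False
    have "(j, c') \<in> boxes lam" using Suc.prems boxes_row_closed by fastforce
    then have "T (j, c) \<le> T (j, c')" using Suc.IH Suc.prems False by simp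
    also have "\<dots> \<le> T (j, Suc c')"
      using assms(1) Suc.prems \<open>(j, c') \<in> boxes lam\<close> by (auto simp: is_SSYT_def)
    finally show ?thesis .
  qed simp
qed simp

lemma SSYT_col_less:
  assumes "is_SSYT lam T" "sorted_wrt (\<ge>) lam" "(j', c) \<in> boxes lam" "j < j'"
  shows "T (j, c) < T (j', c)"
  using assms(3,4)
proof (induction j' arbitrary: j)
  case (Suc j')
  have "(j', c) \<in> boxes lam" by (rule boxes_column_closed[OF assms(2) Suc.prems(1)]) simp
  then have step: "T (j', c) < T (Suc j', c)"
    using assms(1) Suc.prems(1) unfolding is_SSYT_def by blast
  show ?case
  proof (cases "j = j'")
    case False
    then have "j < j'" using Suc.prems(2) by simp
    then have "T (j, c) < T (j', c)" using Suc.IH \<open>(j', c) \<in> boxes lam\<close> by blast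
    then show ?thesis using step by simp
  qed (use step in simp)
qed simp

lemma SSYT_col_mono:
  assumes "is_SSYT lam T" "sorted_wrt (\<ge>) lam" "(j', c) \<in> boxes lam" "j \<le> j'"
  shows "T (j, c) \<le> T (j', c)"
  using SSYT_col_less[OF assms(1-3), of j] assms(4) by (cases "j = j'") simp_all

lemma SSYT_mono:
  assumes "is_SSYT lam T" "sorted_wrt (\<ge>) lam" "(j', c') \<in> boxes lam" "j \<le> j'" "c \<le> c'"
  shows "T (j, c) \<le> T (j', c')"
proof -
  have "(j, c') \<in> boxes lam" using boxes_column_closed[OF assms(2,3,4)] .
  then have "T (j, c) \<le> T (j, c')" using SSYT_row_mono[OF assms(1)] assms(5) by blast
  also have "\<dots> \<le> T (j', c')" using SSYT_col_mono[OF assms(1-4)] .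
  finally show ?thesis .
qed

lemma finite_columns_of_value: "finite {c. \<exists>j. (j, c) \<in> boxes lam \<and> T (j, c) = i}"
  by (rule finite_subset[of _ "snd ` boxes lam"]) (force, simp add: finite_boxes)

lemma leftmost_col_le: "(j, c) \<in> boxes lam \<Longrightarrow> T (j, c) = i \<Longrightarrow> leftmost_col lam T i \<le> c"
  unfolding leftmost_col_def by (rule Min_le[OF finite_columns_of_value]) blast

lemma leftmost_col_in:
  assumes "i \<in> T ` boxes lam"
  obtains j where "(j, leftmost_col lam T i) \<in> boxes lam" "T (j, leftmost_col lam T i) = i"
proof -
  have "{c. \<exists>j. (j, c) \<in> boxes lam \<and> T (j, c) = i} \<noteq> {}" using assms by force
  then have "leftmost_col lam T i \<in> {c. \<exists>j. (j, c) \<in> boxes lam \<and> T (j, c) = i}"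
    unfolding leftmost_col_def by (rule Min_in[OF finite_columns_of_value])
  then show thesis using that by blast
qed

lemma QYT_eq_SSYT: "T \<in> QYT_eq m lam \<Longrightarrow> is_SSYT lam T"
  by (simp add: QYT_eq_def)

lemma QYT_eq_entry_range:
  assumes "T \<in> QYT_eq m lam" "b \<in> boxes lam"
  shows "1 \<le> T b \<and> T b \<le> m"
  using assms finite_boxes by (auto simp: QYT_eq_def is_SSYT_def intro: Max_ge)

lemma QYT_eq_predecessor:
  assumes "T \<in> QYT_eq m lam" "1 < i" "i \<in> T ` boxes lam"
  obtains j c where "(j, c) \<in> boxes lam" "T (j, c) = i - 1" "leftmost_col lam T i \<le> c"
  using assms by (auto simp: QYT_eq_def quasi_yamanouchi_def)

lemma QYT_eq_values:
  assumes T: "T \<in> QYT_eq m lam" and "boxes lam \<noteq> {}" "1 \<le> i" "i \<le> m"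
  shows "i \<in> T ` boxes lam"
proof -
  have "m - d \<in> T ` boxes lam" if "d < m" for d
    using that
  proof (induction d)
    case 0
    show ?case
      using T Max_in[OF finite_imageI[OF finite_boxes]] \<open>boxes lam \<noteq> {}\<close> by (auto simp: QYT_eq_def)
  next
    case (Suc d)
    then have "m - d \<in> T ` boxes lam" "1 < m - d" by simp_all
    then obtain j c where "(j, c) \<in> boxes lam" "T (j, c) = m - Suc d"
      using QYT_eq_predecessor[OF T] by (metis diff_Suc_eq_diff_pred diff_commute)
    then show ?case by (metis image_eqI)
  qed
  from this[of "m - i"] show ?thesis using assms(3,4) by simp
qed

section \<open>The shape \<open>(l1, l2, 2^(h2-2), 1^(h1-h2))\<close>\<close>

lemma nth_hook_shape:
  assumes "2 \<le> h2" "h2 \<le> h1" "j < h1"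
  shows "hook_shape l1 l2 h1 h2 ! j = (if j = 0 then l1 else if j = 1 then l2 else if j < h2 then 2 else 1)"
proof (cases "j < 2")
  case True
  then show ?thesis by (cases j) (auto simp: hook_shape_def)
next
  case False
  then obtain i where i: "j = Suc (Suc i)" by (metis add_2_eq_Suc le_Suc_ex not_less)
  then have "hook_shape l1 l2 h1 h2 ! j = (replicate (h2 - 2) 2 @ replicate (h1 - h2) 1) ! i"
    by (simp add: hook_shape_def)
  then show ?thesis using assms i by (auto simp: nth_append)
qed

lemma length_hook_shape: "2 \<le> h2 \<Longrightarrow> h2 \<le> h1 \<Longrightarrow> length (hook_shape l1 l2 h1 h2) = h1"
  by (simp add: hook_shape_def)

lemma boxes_hook_shape:
  assumes "2 \<le> h2" "h2 \<le> h1"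
  shows "(j, c) \<in> boxes (hook_shape l1 l2 h1 h2) \<longleftrightarrow>
    (j = 0 \<and> c < l1) \<or> (j = 1 \<and> c < l2) \<or> (2 \<le> j \<and> j < h2 \<and> c < 2) \<or> (h2 \<le> j \<and> j < h1 \<and> c = 0)"
  using assms length_hook_shape[OF assms] nth_hook_shape[of h2 h1 j l1 l2]
  by (auto simp: boxes_def split: if_splits)

lemma hook_shape_antitone:
  assumes "2 \<le> l2" "l2 \<le> l1" "2 \<le> h2" "h2 \<le> h1"
  shows "sorted_wrt (\<ge>) (hook_shape l1 l2 h1 h2)"
  unfolding sorted_wrt_iff_nth_less length_hook_shape[OF assms(3,4)]
  using assms nth_hook_shape[of h2 h1 _ l1 l2] by auto

locale hook_partition =
  fixes l1 l2 h1 h2 :: nat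
  assumes l2_le_l1: "l2 \<le> l1" and two_le_l2: "2 \<le> l2"
    and h2_le_h1: "h2 \<le> h1" and two_le_h2: "2 \<le> h2"
begin

abbreviation "shape \<equiv> hook_shape l1 l2 h1 h2"

lemma boxes_iff:
  "(j, c) \<in> boxes shape \<longleftrightarrow>
    (j = 0 \<and> c < l1) \<or> (j = 1 \<and> c < l2) \<or> (2 \<le> j \<and> j < h2 \<and> c < 2) \<or> (h2 \<le> j \<and> j < h1 \<and> c = 0)"
  using boxes_hook_shape[OF two_le_h2 h2_le_h1] .

lemma shape_antitone: "sorted_wrt (\<ge>) shape"
  using hook_shape_antitone[OF two_le_l2 l2_le_l1 two_le_h2 h2_le_h1] .

text \<open>Stated with \<open>Suc 0\<close>, the simp normal form of \<open>1\<close>.\<close>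
lemma row0_iff [simp]: "(0, c) \<in> boxes shape \<longleftrightarrow> c < l1"
  and row1_iff [simp]: "(Suc 0, c) \<in> boxes shape \<longleftrightarrow> c < l2"
  and col0_iff [simp]: "(j, 0) \<in> boxes shape \<longleftrightarrow> j < h1"
  and col1_iff [simp]: "(j, Suc 0) \<in> boxes shape \<longleftrightarrow> j < h2"
  using l2_le_l1 two_le_l2 h2_le_h1 two_le_h2 by (simp_all add: boxes_iff) linarith+

lemma box_cases:
  assumes "(j, c) \<in> boxes shape"
  obtains "c = 0" "j < h1" | "j = 0" "0 < c" "c < l1" | "j = 1" "0 < c" "c < l2"
    | "2 \<le> j" "j < h2" "c = 1"
proof -
  have "c = 0 \<Longrightarrow> j < h1" using assms boxes_row_closed[OF assms, of 0] by simp
  then show thesis using that assms h2_le_h1 l2_le_l1 unfolding boxes_iff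
    by (cases "c = 0") (auto simp: less_2_cases_iff)
qed

end

section \<open>Largest entry \<open>h1\<close>\<close>

context hook_partition
begin

lemma first_column_eq:
  assumes T: "T \<in> QYT_eq h1 shape" and j: "j < h1"
  shows "T (j, 0) = j + 1"
proof -
  have S: "is_SSYT shape T" using T by (rule QYT_eq_SSYT)
  have step: "T (i, 0) < T (Suc i, 0)" if "Suc i < h1" for i
    using SSYT_col_less[OF S shape_antitone] that by simp
  note gap = increasing_nat_gap[of h1 "\<lambda>i. T (i, 0)", OF step]
  have "1 \<le> T (0, 0)" "T (h1 - 1, 0) \<le> h1"
    using QYT_eq_entry_range[OF T] h2_le_h1 two_le_h2 by auto
  moreover have "T (0, 0) + j \<le> T (j, 0)" "T (j, 0) + (h1 - 1 - j) \<le> T (h1 - 1, 0)"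
    using gap[of 0 j] gap[of j "h1 - 1"] j by simp_all
  ultimately show ?thesis using j by linarith
qed

definition reading_code :: "(nat \<times> nat \<Rightarrow> nat) \<Rightarrow> nat list \<times> nat list \<times> nat list" where
  "reading_code T = (map (\<lambda>c. T (0, c)) [1..<l1], map (\<lambda>c. T (1, c)) [1..<l2], map (\<lambda>j. T (j, 1)) [2..<h2])"

definition tableau_of_reading_code :: "nat list \<times> nat list \<times> nat list \<Rightarrow> nat \<times> nat \<Rightarrow> nat" where
  "tableau_of_reading_code = (\<lambda>(u, v, w) (j, c).
     if (j, c) \<notin> boxes shape then 0 else if c = 0 then j + 1
     else if j = 0 then u ! (c - 1) else if j = 1 then v ! (c - 1) else w ! (j - 2))"

lemma reading_code_in:
  assumes T: "T \<in> QYT_eq h1 shape"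
  shows "reading_code T \<in> compatible_triples (l1 - 1) (l2 - 1) (h2 - 2) h1"
proof -
  have S: "is_SSYT shape T" using T by (rule QYT_eq_SSYT)
  note range = QYT_eq_entry_range[OF T]
  have u: "map (\<lambda>c. T (0, c)) [1..<l1] \<in> sorted_lists (l1 - 1) {1..h1}"
    unfolding sorted_lists_def sorted_iff_nth_mono using SSYT_row_mono[OF S] range by auto
  have v: "map (\<lambda>c. T (1, c)) [1..<l2] \<in> sorted_lists (l2 - 1) {1..h1}"
    unfolding sorted_lists_def sorted_iff_nth_mono using SSYT_row_mono[OF S] range by auto
  have w: "map (\<lambda>j. T (j, 1)) [2..<h2] \<in> strict_lists (h2 - 2) {1..h1}"
    unfolding strict_lists_def sorted_wrt_iff_nth_less using SSYT_col_less[OF S shape_antitone] range by auto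
  have "hd (map (\<lambda>c. T (1, c)) [1..<l2]) = T (1, 1)" using two_le_l2 by (simp add: hd_map upt_rec)
  moreover have "\<forall>y\<in>set (map (\<lambda>j. T (j, 1)) [2..<h2]). T (1, 1) < y"
    using SSYT_col_less[OF S shape_antitone] by auto
  moreover have "column_strict (map (\<lambda>c. T (0, c)) [1..<l1]) (map (\<lambda>c. T (1, c)) [1..<l2])"
    unfolding column_strict_def using l2_le_l1 SSYT_col_less[OF S shape_antitone, of 1 _ 0] by auto
  ultimately show ?thesis using u v w by (simp add: reading_code_def compatible_triples_def hook_pairs_def)
qed

lemma tableau_of_reading_code_outside: "(j, c) \<notin> boxes shape \<Longrightarrow> tableau_of_reading_code t (j, c) = 0"
  and tableau_of_reading_code_col0: "j < h1 \<Longrightarrow> tableau_of_reading_code t (j, 0) = j + 1"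
  and tableau_of_reading_code_row0:
    "0 < c \<Longrightarrow> c < l1 \<Longrightarrow> tableau_of_reading_code (u, v, w) (0, c) = u ! (c - 1)"
  and tableau_of_reading_code_row1:
    "0 < c \<Longrightarrow> c < l2 \<Longrightarrow> tableau_of_reading_code (u, v, w) (1, c) = v ! (c - 1)"
  and tableau_of_reading_code_col1:
    "2 \<le> j \<Longrightarrow> j < h2 \<Longrightarrow> tableau_of_reading_code (u, v, w) (j, 1) = w ! (j - 2)"
  by (auto simp: tableau_of_reading_code_def split: prod.splits)

context
  fixes u v w
  assumes uvw: "(u, v, w) \<in> compatible_triples (l1 - 1) (l2 - 1) (h2 - 2) h1"
begin

lemma reading_triple:
  "length u = l1 - 1" "sorted u" "set u \<subseteq> {1..h1}"
  "length v = l2 - 1" "sorted v" "set v \<subseteq> {1..h1}"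
  "length w = h2 - 2" "sorted_wrt (<) w" "set w \<subseteq> {1..h1}"
  "i < l2 - 1 \<Longrightarrow> u ! i < v ! i" "\<forall>y\<in>set w. hd v < y"
  using uvw by (auto simp: compatible_triples_def hook_pairs_def sorted_lists_def
      strict_lists_def column_strict_def)

lemma reading_triple_col1_above: "i < h2 - 2 \<Longrightarrow> v ! 0 < w ! i"
proof -
  assume "i < h2 - 2"
  then have "w ! i \<in> set w" using reading_triple(7) by simp
  moreover have "hd v = v ! 0" using reading_triple(4) two_le_l2 by (cases v) auto
  ultimately show ?thesis using reading_triple(11) by auto
qed

lemma reading_triple_nth_range:
  "i < l1 - 1 \<Longrightarrow> 1 \<le> u ! i \<and> u ! i \<le> h1"
  "i < l2 - 1 \<Longrightarrow> 1 \<le> v ! i \<and> v ! i \<le> h1"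
  "i < h2 - 2 \<Longrightarrow> 1 \<le> w ! i \<and> w ! i \<le> h1"
proof -
  assume "i < l1 - 1"
  then have "u ! i \<in> set u" using reading_triple(1) by simp
  then show "1 \<le> u ! i \<and> u ! i \<le> h1" using reading_triple(3) by auto
next
  assume "i < l2 - 1"
  then have "v ! i \<in> set v" using reading_triple(4) by simp
  then show "1 \<le> v ! i \<and> v ! i \<le> h1" using reading_triple(6) by auto
next
  assume "i < h2 - 2"
  then have "w ! i \<in> set w" using reading_triple(7) by simp
  then show "1 \<le> w ! i \<and> w ! i \<le> h1" using reading_triple(9) by auto
qed

lemma reading_triple_col1_lower: "i < h2 - 2 \<Longrightarrow> i + 3 \<le> w ! i"
proof -
  assume i: "i < h2 - 2"
  have "2 \<le> v ! 0"
    using reading_triple(10)[of 0] reading_triple_nth_range(1)[of 0] two_le_l2 l2_le_l1 by simp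
  moreover have "v ! 0 < w ! 0" using reading_triple_col1_above[of 0] i by simp
  ultimately have "3 \<le> w ! 0" by simp
  then show ?thesis using sorted_wrt_less_nth_gap[OF reading_triple(8), of i] reading_triple(7) i by simp
qed

abbreviation "reading_tableau \<equiv> tableau_of_reading_code (u, v, w)"

lemma tableau_of_reading_code_range: "(j, c) \<in> boxes shape \<Longrightarrow> 1 \<le> reading_tableau (j, c) \<and> reading_tableau (j, c) \<le> h1"
proof (erule box_cases)
  assume "j = 0" "0 < c" "c < l1"
  then show ?thesis using reading_triple_nth_range(1)[of "c - 1"] tableau_of_reading_code_row0 by simp
next
  assume "j = 1" "0 < c" "c < l2"
  then show ?thesis using reading_triple_nth_range(2)[of "c - 1"] tableau_of_reading_code_row1 by simp
next
  assume "2 \<le> j" "j < h2" "c = 1"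
  then show ?thesis using reading_triple_nth_range(3)[of "j - 2"] tableau_of_reading_code_col1 by simp
qed (simp add: tableau_of_reading_code_col0)

lemma tableau_of_reading_code_row_mono:
  assumes "(j, Suc c) \<in> boxes shape"
  shows "reading_tableau (j, c) \<le> reading_tableau (j, Suc c)"
  using assms
proof (cases rule: box_cases)
  case 2
  show ?thesis
  proof (cases "c = 0")
    case True
    then show ?thesis
      using 2 tableau_of_reading_code_col0 tableau_of_reading_code_row0 reading_triple_nth_range(1)[of 0]
        h2_le_h1 two_le_h2 by simp
  next
    case False
    then have "u ! (c - 1) \<le> u ! c" using reading_triple(1,2) 2 by (simp add: sorted_iff_nth_mono)
    then show ?thesis using 2 False tableau_of_reading_code_row0 by simp
  qed
next
  case 3
  show ?thesis
  proof (cases "c = 0")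
    case True
    have "u ! 0 < v ! 0" "1 \<le> u ! 0"
      using reading_triple(10)[of 0] reading_triple_nth_range(1)[of 0] two_le_l2 l2_le_l1 by auto
    then show ?thesis using 3 True tableau_of_reading_code_col0 tableau_of_reading_code_row1
      h2_le_h1 two_le_h2 by simp
  next
    case False
    then have "v ! (c - 1) \<le> v ! c" using reading_triple(4,5) 3 by (simp add: sorted_iff_nth_mono)
    then show ?thesis using 3 False tableau_of_reading_code_row1 by simp
  qed
next
  case 4
  then show ?thesis using tableau_of_reading_code_col0 tableau_of_reading_code_col1
    reading_triple_col1_lower[of "j - 2"] h2_le_h1 by simp
qed simp

lemma tableau_of_reading_code_col_less:
  assumes "(Suc j, c) \<in> boxes shape"
  shows "reading_tableau (j, c) < reading_tableau (Suc j, c)"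
  using assms
proof (cases rule: box_cases)
  case 1
  then show ?thesis using tableau_of_reading_code_col0 by simp
next
  case 3
  then show ?thesis using tableau_of_reading_code_row0 tableau_of_reading_code_row1
    reading_triple(10)[of "c - 1"] l2_le_l1 by simp
next
  case 4
  show ?thesis
  proof (cases "j = 1")
    case True
    then show ?thesis using 4 tableau_of_reading_code_row1 tableau_of_reading_code_col1
      reading_triple_col1_above[of 0] two_le_l2 by simp
  next
    case False
    then have "w ! (j - 2) < w ! (Suc j - 2)"
      using reading_triple(7,8) 4 sorted_wrt_nth_less by fastforce
    then show ?thesis using 4 False tableau_of_reading_code_col1 by simp
  qed
qed simp

lemma tableau_of_reading_code_SSYT: "is_SSYT shape reading_tableau"
  unfolding is_SSYT_def
  using tableau_of_reading_code_outside tableau_of_reading_code_range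
    tableau_of_reading_code_row_mono tableau_of_reading_code_col_less by auto

lemma tableau_of_reading_code_in: "reading_tableau \<in> QYT_eq h1 shape"
proof -
  have top: "reading_tableau (h1 - 1, 0) = h1" "(h1 - 1, 0) \<in> boxes shape"
    using tableau_of_reading_code_col0 h2_le_h1 two_le_h2 by auto
  have "Max (reading_tableau ` boxes shape) = h1"
  proof (rule Max_eqI)
    show "h1 \<in> reading_tableau ` boxes shape" using top by (metis image_eqI)
  qed (use finite_boxes tableau_of_reading_code_range in auto)
  moreover have "quasi_yamanouchi shape reading_tableau"
    unfolding quasi_yamanouchi_def
  proof (intro allI impI)
    fix i assume i: "1 < i \<and> i \<in> reading_tableau ` boxes shape"
    then have "i \<le> h1" using tableau_of_reading_code_range by auto
    then have "(i - 1, 0) \<in> boxes shape" "reading_tableau (i - 1, 0) = i"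
      "(i - 2, 0) \<in> boxes shape" "reading_tableau (i - 2, 0) = i - 1"
      using i tableau_of_reading_code_col0 by auto
    moreover have "leftmost_col shape reading_tableau i \<le> 0"
      using leftmost_col_le calculation(1,2) .
    ultimately show "\<exists>j c. (j, c) \<in> boxes shape \<and> reading_tableau (j, c) = i - 1 \<and> leftmost_col shape reading_tableau i \<le> c"
      by blast
  qed
  ultimately show ?thesis using tableau_of_reading_code_SSYT by (simp add: QYT_eq_def)
qed

lemma reading_code_tableau_of_reading_code: "reading_code reading_tableau = (u, v, w)"
proof -
  have "map (\<lambda>c. reading_tableau (0, c)) [1..<l1] = u"
    by (rule nth_equalityI) (simp_all add: reading_triple(1) tableau_of_reading_code_row0)
  moreover have "map (\<lambda>c. reading_tableau (1, c)) [1..<l2] = v"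
    by (rule nth_equalityI) (simp_all add: reading_triple(4) tableau_of_reading_code_row1[simplified])
  moreover have "map (\<lambda>j. reading_tableau (j, 1)) [2..<h2] = w"
    by (rule nth_equalityI) (simp_all add: reading_triple(7) tableau_of_reading_code_col1[simplified])
  ultimately show ?thesis by (simp add: reading_code_def)
qed

end

lemma tableau_of_reading_code_reading_code:
  assumes T: "T \<in> QYT_eq h1 shape"
  shows "tableau_of_reading_code (reading_code T) = T"
proof
  fix b :: "nat \<times> nat"
  obtain j c where b: "b = (j, c)" by (cases b)
  have "tableau_of_reading_code (reading_code T) (j, c) = T (j, c)"
  proof (cases "(j, c) \<in> boxes shape")
    case False
    then show ?thesis
      using QYT_eq_SSYT[OF T] tableau_of_reading_code_outside by (auto simp: is_SSYT_def)
  next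
    case True
    then show ?thesis
    proof (cases rule: box_cases)
      case 1
      then show ?thesis using first_column_eq[OF T] tableau_of_reading_code_col0 by simp
    next
      case 2
      then have "[1..<l1] ! (c - 1) = c" by simp
      then show ?thesis using 2 tableau_of_reading_code_row0 by (simp add: reading_code_def)
    next
      case 3
      then have "[1..<l2] ! (c - 1) = c" by simp
      then show ?thesis using 3 tableau_of_reading_code_row1 by (simp add: reading_code_def)
    next
      case 4
      then have "[2..<h2] ! (j - 2) = j" by simp
      then show ?thesis using 4 tableau_of_reading_code_col1 by (simp add: reading_code_def)
    qed
  qed
  then show "tableau_of_reading_code (reading_code T) b = T b" using b by simp
qed

lemma card_QYT_first_column:
  "card (QYT_eq h1 shape) = card (compatible_triples (l1 - 1) (l2 - 1) (h2 - 2) h1)"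
proof (rule bij_betw_same_card[OF bij_betw_byWitness[where f' = tableau_of_reading_code]])
  show "reading_code ` QYT_eq h1 shape \<subseteq> compatible_triples (l1 - 1) (l2 - 1) (h2 - 2) h1"
    using reading_code_in by auto
  show "tableau_of_reading_code ` compatible_triples (l1 - 1) (l2 - 1) (h2 - 2) h1 \<subseteq> QYT_eq h1 shape"
    using tableau_of_reading_code_in by auto
qed (use tableau_of_reading_code_reading_code reading_code_tableau_of_reading_code in auto)

end

section \<open>Largest entry \<open>n - (l1 - 1)\<close>\<close>

context hook_partition
begin

definition max_entry :: nat where "max_entry = l2 + h1 + h2 - 3"

definition upper_boxes :: "(nat \<times> nat) set" where
  "upper_boxes = {b \<in> boxes shape. 0 < fst b}"

lemma mem_upper_boxes [simp]: "(j, c) \<in> upper_boxes \<longleftrightarrow> (j, c) \<in> boxes shape \<and> 0 < j"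
  by (simp add: upper_boxes_def)

lemma upper_boxes_subset: "x \<in> upper_boxes \<Longrightarrow> x \<in> boxes shape"
  by (simp add: upper_boxes_def)

lemma finite_upper_boxes: "finite upper_boxes"
  using finite_boxes by (simp add: upper_boxes_def)

lemma three_le_max_entry: "3 \<le> max_entry"
  using two_le_l2 two_le_h2 h2_le_h1 by (simp add: max_entry_def)

lemma card_upper_boxes: "card upper_boxes = max_entry - 1"
proof -
  have eq: "upper_boxes = ({1} \<times> {..<l2}) \<union> ({2..<h2} \<times> {0, 1}) \<union> ({h2..<h1} \<times> {0})"
  proof (rule set_eqI)
    fix x :: "nat \<times> nat"
    obtain j c where x: "x = (j, c)" by (cases x)
    show "x \<in> upper_boxes \<longleftrightarrow> x \<in> ({1} \<times> {..<l2}) \<union> ({2..<h2} \<times> {0, 1}) \<union> ({h2..<h1} \<times> {0})"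
      unfolding x upper_boxes_def using boxes_iff[of j c] two_le_h2 by auto
  qed
  have "card upper_boxes = card (({1} \<times> {..<l2}) \<union> ({2..<h2} \<times> {0::nat, 1})) + card ({h2..<h1} \<times> {0::nat})"
    unfolding eq using two_le_h2 by (intro card_Un_disjoint) auto
  also have "card (({1} \<times> {..<l2}) \<union> ({2..<h2} \<times> {0::nat, 1}))
      = card ({1::nat} \<times> {..<l2}) + card ({2..<h2} \<times> {0::nat, 1})"
    by (intro card_Un_disjoint) auto
  finally have "card upper_boxes = l2 + (h2 - 2) * 2 + (h1 - h2)" by (simp add: card_cartesian_product)
  then show ?thesis using h2_le_h1 two_le_h2 two_le_l2 by (simp add: max_entry_def)
qed

lemma row0_less_upper:
  assumes "T \<in> QYT_eq m shape" "x \<in> upper_boxes"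
  shows "T (0, snd x) < T x"
  using assms SSYT_col_less[OF QYT_eq_SSYT[OF assms(1)] shape_antitone] by (cases x) auto

lemma upper_boxes_values:
  assumes T: "T \<in> QYT_eq max_entry shape" and i: "2 \<le> i" "i \<le> max_entry"
  obtains x where "x \<in> upper_boxes" "T x = i"
proof -
  have "boxes shape \<noteq> {}" using row0_iff[of 0] l2_le_l1 two_le_l2 by fastforce
  then have "i \<in> T ` boxes shape" using QYT_eq_values[OF T] i by simp
  then obtain j where j: "(j, leftmost_col shape T i) \<in> boxes shape" "T (j, leftmost_col shape T i) = i"
    by (rule leftmost_col_in)
  obtain j' c where pred: "(j', c) \<in> boxes shape" "T (j', c) = i - 1" "leftmost_col shape T i \<le> c"
    using QYT_eq_predecessor[OF T _ \<open>i \<in> T ` boxes shape\<close>] i by auto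
  have "j \<noteq> 0"
  proof
    assume "j = 0"
    then have "T (j, leftmost_col shape T i) \<le> T (j', c)"
      using SSYT_mono[OF QYT_eq_SSYT[OF T] shape_antitone pred(1)] pred(3) by simp
    then show False using j(2) pred(2) i by simp
  qed
  then show thesis using that[of "(j, leftmost_col shape T i)"] j by simp
qed

lemma upper_entry_range:
  assumes T: "T \<in> QYT_eq max_entry shape" and x: "x \<in> upper_boxes"
  shows "2 \<le> T x \<and> T x \<le> max_entry"
proof -
  obtain j c where x_eq: "x = (j, c)" by (cases x)
  have "(0, c) \<in> boxes shape"
    using boxes_column_closed[OF shape_antitone, of j c 0] x x_eq by simp
  then have "(0, snd x) \<in> boxes shape" using x_eq by simp
  then have "1 \<le> T (0, snd x)" using QYT_eq_entry_range[OF T] by blast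
  then show ?thesis
    using row0_less_upper[OF T x] QYT_eq_entry_range[OF T upper_boxes_subset[OF x]] by simp
qed

lemma image_upper_boxes:
  assumes T: "T \<in> QYT_eq max_entry shape"
  shows "T ` upper_boxes = {2..max_entry}"
proof
  show "T ` upper_boxes \<subseteq> {2..max_entry}" using upper_entry_range[OF T] by auto
  show "{2..max_entry} \<subseteq> T ` upper_boxes"
  proof
    fix i assume "i \<in> {2..max_entry}"
    then obtain x where "x \<in> upper_boxes" "T x = i" using upper_boxes_values[OF T] by auto
    then show "i \<in> T ` upper_boxes" by blast
  qed
qed

lemma inj_on_upper_boxes:
  assumes T: "T \<in> QYT_eq max_entry shape"
  shows "inj_on T upper_boxes"
  by (rule eq_card_imp_inj_on[OF finite_upper_boxes])
    (use three_le_max_entry in \<open>simp add: image_upper_boxes[OF T] card_upper_boxes\<close>)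

lemma origin_eq_one:
  assumes T: "T \<in> QYT_eq max_entry shape"
  shows "T (0, 0) = 1"
proof -
  have "boxes shape \<noteq> {}" using row0_iff[of 0] l2_le_l1 two_le_l2 by fastforce
  then obtain j c where jc: "(j, c) \<in> boxes shape" "T (j, c) = 1"
    using QYT_eq_values[OF T, of 1] three_le_max_entry by fastforce
  then have "T (0, 0) \<le> 1" using SSYT_mono[OF QYT_eq_SSYT[OF T] shape_antitone jc(1)] by simp
  moreover have "(0, 0) \<in> boxes shape" using h2_le_h1 two_le_h2 by simp
  ultimately show ?thesis using QYT_eq_entry_range[OF T] by fastforce
qed

lemma leftmost_occurrence_upper:
  assumes T: "T \<in> QYT_eq max_entry shape" and i: "i \<in> T ` boxes shape"
    and not_row0: "\<forall>c<l1. T (0, c) \<noteq> i"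
  obtains x where "x \<in> upper_boxes" "T x = i" "snd x = leftmost_col shape T i"
proof -
  obtain j where j: "(j, leftmost_col shape T i) \<in> boxes shape" "T (j, leftmost_col shape T i) = i"
    using i by (rule leftmost_col_in)
  then have "j \<noteq> 0" using not_row0 by (cases "j = 0") auto
  then show thesis using that[of "(j, leftmost_col shape T i)"] j by simp
qed

lemma leftmost_col_le_predecessor:
  assumes T: "T \<in> QYT_eq max_entry shape" and y: "y \<in> upper_boxes"
    and i: "i \<in> T ` boxes shape" "T y + 1 = i" and not_row0: "\<forall>c<l1. T (0, c) \<noteq> T y"
  shows "leftmost_col shape T i \<le> snd y"
proof -
  have "1 < i" using i(2) upper_entry_range[OF T y] by simp
  then obtain j c where pred: "(j, c) \<in> boxes shape" "T (j, c) = i - 1" "leftmost_col shape T i \<le> c"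
    by (rule QYT_eq_predecessor[OF T _ i(1)])
  then have "T (j, c) = T y" using i(2) by simp
  with pred have "(j, c) \<in> upper_boxes" using not_row0 by (cases "j = 0") auto
  then have "(j, c) = y" using inj_onD[OF inj_on_upper_boxes[OF T]] y \<open>T (j, c) = T y\<close> by blast
  then show ?thesis using pred(3) by auto
qed

text \<open>This is where the quasi-Yamanouchi condition enters: without a bottom-row entry in
  between, the values from \<open>T x1\<close> up to \<open>T x2\<close> would each first occur weakly left of
  their predecessor, pushing \<open>x2\<close> left of \<open>x1\<close>.\<close>
lemma row0_entry_between:
  assumes T: "T \<in> QYT_eq max_entry shape" and x1: "x1 \<in> upper_boxes" and x2: "x2 \<in> upper_boxes"
    and col: "snd x1 < snd x2" and val: "T x1 < T x2"
  obtains c where "c < l1" "T x1 \<le> T (0, c)" "T (0, c) < T x2"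
proof (rule ccontr)
  assume "\<not> thesis"
  note no_entry = that
  have gap: "\<forall>c<l1. T (0, c) \<noteq> i" if "T x1 \<le> i" "i < T x2" for i
  proof (intro allI impI)
    fix c assume "c < l1"
    then show "T (0, c) \<noteq> i" using no_entry[of c] \<open>\<not> thesis\<close> that by auto
  qed
  have range: "T x2 \<le> max_entry" "2 \<le> T x1"
    using upper_entry_range[OF T x2] upper_entry_range[OF T x1] by auto
  have left: "\<exists>y\<in>upper_boxes. T y = T x1 + d \<and> snd y \<le> snd x1" if "T x1 + d < T x2" for d
    using that
  proof (induction d)
    case (Suc d)
    then obtain y where y: "y \<in> upper_boxes" "T y = T x1 + d" "snd y \<le> snd x1" by auto
    have "2 \<le> T x1 + Suc d" "T x1 + Suc d \<le> max_entry" using range Suc.prems by auto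
    then obtain x' where "x' \<in> upper_boxes" "T x' = T x1 + Suc d" by (rule upper_boxes_values[OF T])
    then have mem: "T x1 + Suc d \<in> T ` boxes shape" by (metis image_eqI upper_boxes_subset)
    obtain x where "x \<in> upper_boxes" "T x = T x1 + Suc d"
      "snd x = leftmost_col shape T (T x1 + Suc d)"
      using leftmost_occurrence_upper[OF T mem] gap Suc.prems by auto
    moreover have "leftmost_col shape T (T x1 + Suc d) \<le> snd y"
      using leftmost_col_le_predecessor[OF T y(1) mem] y(2) gap Suc.prems by simp
    ultimately show ?case using y(3) by auto
  qed (use x1 in auto)
  obtain y where y: "y \<in> upper_boxes" "T y + 1 = T x2" "snd y \<le> snd x1" "T x1 \<le> T y"
    using left[of "T x2 - 1 - T x1"] val by auto
  have x2_box: "T x2 \<in> T ` boxes shape" using x2 upper_boxes_subset by blast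
  have L: "leftmost_col shape T (T x2) \<le> snd x1"
    using leftmost_col_le_predecessor[OF T y(1) x2_box y(2)] gap[of "T y"] y by auto
  obtain j where j: "(j, leftmost_col shape T (T x2)) \<in> boxes shape"
    "T (j, leftmost_col shape T (T x2)) = T x2"
    using x2_box by (rule leftmost_col_in)
  show False
  proof (cases "j = 0")
    case True
    have "(0, snd x1) \<in> boxes shape"
      using boxes_column_closed[OF shape_antitone, of "fst x1" "snd x1" 0] x1 by (cases x1) auto
    then have "T (0, leftmost_col shape T (T x2)) \<le> T (0, snd x1)"
      using SSYT_row_mono[OF QYT_eq_SSYT[OF T]] L by blast
    also have "\<dots> < T x1" using row0_less_upper[OF T x1] .
    finally show False using j True val by simp
  next
    case False
    then have "(j, leftmost_col shape T (T x2)) = x2"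
      using inj_onD[OF inj_on_upper_boxes[OF T]] j x2 by simp
    then have "snd x2 = leftmost_col shape T (T x2)" by (metis snd_conv)
    then show False using L col by simp
  qed
qed

definition rank :: "(nat \<times> nat \<Rightarrow> nat) \<Rightarrow> nat \<times> nat \<Rightarrow> nat" where
  "rank T x = card {c. c < l1 \<and> T (0, c) < T x}"

lemma rank_le: "rank T x \<le> l1"
  unfolding rank_def by (rule order.trans[OF card_mono[of "{..<l1}"]]) auto

lemma rank_mono: "T x \<le> T y \<Longrightarrow> rank T x \<le> rank T y"
  unfolding rank_def by (rule card_mono) auto

lemma rank_pos:
  assumes T: "T \<in> QYT_eq max_entry shape" and x: "x \<in> upper_boxes"
  shows "1 \<le> rank T x"
proof -
  have "0 \<in> {c. c < l1 \<and> T (0, c) < T x}"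
    using origin_eq_one[OF T] upper_entry_range[OF T x] l2_le_l1 two_le_l2 by simp
  then have "{c. c < l1 \<and> T (0, c) < T x} \<noteq> {}" by blast
  then show ?thesis unfolding rank_def by (simp add: Suc_leI card_gt_0_iff)
qed

lemma rank_less:
  assumes T: "T \<in> QYT_eq max_entry shape" and x: "x \<in> upper_boxes" and y: "y \<in> upper_boxes"
    and col: "snd x < snd y" and val: "T x < T y"
  shows "rank T x < rank T y"
proof -
  obtain c where c: "c < l1" "T x \<le> T (0, c)" "T (0, c) < T y"
    using row0_entry_between[OF T x y col val] .
  have "{c. c < l1 \<and> T (0, c) < T x} \<subseteq> {c. c < l1 \<and> T (0, c) < T y}" using val by auto
  moreover have "c \<in> {c. c < l1 \<and> T (0, c) < T y}" "c \<notin> {c. c < l1 \<and> T (0, c) < T x}"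
    using c by auto
  ultimately have "{c. c < l1 \<and> T (0, c) < T x} \<subset> {c. c < l1 \<and> T (0, c) < T y}" by blast
  then show ?thesis unfolding rank_def by (rule psubset_card_mono[rotated]) simp
qed

lemma upper_row_less:
  assumes T: "T \<in> QYT_eq max_entry shape" and x: "(j, c) \<in> upper_boxes" and y: "(j, c') \<in> upper_boxes"
    and "c < c'"
  shows "T (j, c) < T (j, c')"
proof -
  have "T (j, c) \<le> T (j, c')"
    using SSYT_row_mono[OF QYT_eq_SSYT[OF T] upper_boxes_subset[OF y]] \<open>c < c'\<close> by simp
  moreover have "T (j, c) \<noteq> T (j, c')"
    using inj_onD[OF inj_on_upper_boxes[OF T] _ x y] \<open>c < c'\<close> by auto
  ultimately show ?thesis by simp
qed

lemma rank_row_less: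
  assumes T: "T \<in> QYT_eq max_entry shape" and x: "(j, c) \<in> upper_boxes" and y: "(j, c') \<in> upper_boxes"
    and "c < c'"
  shows "rank T (j, c) < rank T (j, c')"
  using rank_less[OF T x y] upper_row_less[OF T x y] \<open>c < c'\<close> by simp

lemma rank_col_mono:
  assumes T: "T \<in> QYT_eq max_entry shape" and y: "(j', c) \<in> upper_boxes" and "j \<le> j'"
  shows "rank T (j, c) \<le> rank T (j', c)"
  using rank_mono SSYT_col_mono[OF QYT_eq_SSYT[OF T] shape_antitone upper_boxes_subset[OF y] \<open>j \<le> j'\<close>]
  by blast

definition rank_code :: "(nat \<times> nat \<Rightarrow> nat) \<Rightarrow> nat list \<times> nat list \<times> nat list" where
  "rank_code T = (map (\<lambda>j. rank T (j, 0)) [1..<h1], map (\<lambda>j. rank T (j, 1)) [1..<h2],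
     map (\<lambda>c. rank T (1, c)) [2..<l2])"

lemma rank_code_in:
  assumes T: "T \<in> QYT_eq max_entry shape"
  shows "rank_code T \<in> compatible_triples (h1 - 1) (h2 - 1) (l2 - 2) l1"
proof -
  have range: "1 \<le> rank T x \<and> rank T x \<le> l1" if "x \<in> upper_boxes" for x
    using rank_pos[OF T that] rank_le by simp
  have col0: "(j, 0) \<in> upper_boxes \<longleftrightarrow> 1 \<le> j \<and> j < h1"
    and col1: "(j, 1) \<in> upper_boxes \<longleftrightarrow> 1 \<le> j \<and> j < h2"
    and row1: "(1, c) \<in> upper_boxes \<longleftrightarrow> c < l2" for j c
    by auto
  have u: "map (\<lambda>j. rank T (j, 0)) [1..<h1] \<in> sorted_lists (h1 - 1) {1..l1}"
    unfolding sorted_lists_def sorted_iff_nth_mono using rank_col_mono[OF T] range col0 by auto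
  have v: "map (\<lambda>j. rank T (j, 1)) [1..<h2] \<in> sorted_lists (h2 - 1) {1..l1}"
    unfolding sorted_lists_def sorted_iff_nth_mono using rank_col_mono[OF T] range col1 by auto
  have w: "map (\<lambda>c. rank T (1, c)) [2..<l2] \<in> strict_lists (l2 - 2) {1..l1}"
    unfolding strict_lists_def sorted_wrt_iff_nth_less using rank_row_less[OF T] range row1 by auto
  have "hd (map (\<lambda>j. rank T (j, 1)) [1..<h2]) = rank T (1, 1)" using two_le_h2 by (simp add: upt_rec)
  moreover have "\<forall>y\<in>set (map (\<lambda>c. rank T (1, c)) [2..<l2]). rank T (1, 1) < y"
    using rank_row_less[OF T, of 1 1] row1 two_le_l2 two_le_h2 by auto
  moreover have "column_strict (map (\<lambda>j. rank T (j, 0)) [1..<h1]) (map (\<lambda>j. rank T (j, 1)) [1..<h2])"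
    unfolding column_strict_def using h2_le_h1 rank_row_less[OF T, of _ 0 1] col0 col1 by auto
  ultimately show ?thesis using u v w by (simp add: rank_code_def compatible_triples_def hook_pairs_def)
qed


definition precedes :: "(nat \<times> nat \<Rightarrow> nat) \<Rightarrow> nat \<times> nat \<Rightarrow> nat \<times> nat \<Rightarrow> bool" where
  "precedes P y x \<longleftrightarrow> P y < P x \<or> (P y = P x \<and> fst y \<le> fst x)"

lemma precedes_refl [simp]: "precedes P x x"
  and precedes_trans: "precedes P z y \<Longrightarrow> precedes P y x \<Longrightarrow> precedes P z x"
  and precedes_total: "precedes P x y \<or> precedes P y x"
  by (auto simp: precedes_def)

definition rank_function :: "(nat \<times> nat \<Rightarrow> nat) \<Rightarrow> bool" where
  "rank_function P \<longleftrightarrow>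
     (\<forall>x\<in>upper_boxes. snd x < P x \<and> P x \<le> l1) \<and>
     (\<forall>j c c'. (j, c') \<in> upper_boxes \<longrightarrow> c < c' \<longrightarrow> P (j, c) < P (j, c')) \<and>
     (\<forall>j j' c. (j', c) \<in> upper_boxes \<longrightarrow> 0 < j \<longrightarrow> j \<le> j' \<longrightarrow> P (j, c) \<le> P (j', c))"

definition code_entry :: "nat list \<times> nat list \<times> nat list \<Rightarrow> nat \<times> nat \<Rightarrow> nat" where
  "code_entry = (\<lambda>(u, v, w) (j, c). if c = 0 then u ! (j - 1) else if c = 1 then v ! (j - 1) else w ! (c - 2))"

lemma code_entry_col0: "code_entry (u, v, w) (j, 0) = u ! (j - 1)"
  and code_entry_col1: "code_entry (u, v, w) (j, Suc 0) = v ! (j - 1)"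
  and code_entry_row1: "2 \<le> c \<Longrightarrow> code_entry (u, v, w) (j, c) = w ! (c - 2)"
  by (simp_all add: code_entry_def)

lemma upper_box_cases:
  assumes "x \<in> upper_boxes"
  obtains j where "x = (j, 0)" "0 < j" "j < h1" | j where "x = (j, 1)" "0 < j" "j < h2"
    | c where "x = (1, c)" "2 \<le> c" "c < l2"
proof -
  obtain j c where x: "x = (j, c)" by (cases x)
  then have "(j, c) \<in> boxes shape" "0 < j" using assms by auto
  then consider "c = 0" "j < h1" | "c = 1" "j < h2" | "j = 1" "2 \<le> c" "c < l2"
    using two_le_h2 by (elim box_cases) (auto, linarith)
  then show thesis using that x \<open>0 < j\<close> by cases auto
qed

context
  fixes u v w
  assumes uvw: "(u, v, w) \<in> compatible_triples (h1 - 1) (h2 - 1) (l2 - 2) l1"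
begin

lemma rank_triple:
  "length u = h1 - 1" "sorted u" "set u \<subseteq> {1..l1}"
  "length v = h2 - 1" "sorted v" "set v \<subseteq> {1..l1}"
  "length w = l2 - 2" "sorted_wrt (<) w" "set w \<subseteq> {1..l1}"
  "i < h2 - 1 \<Longrightarrow> u ! i < v ! i" "\<forall>y\<in>set w. hd v < y"
  using uvw by (auto simp: compatible_triples_def hook_pairs_def sorted_lists_def
      strict_lists_def column_strict_def)

lemma rank_triple_nth_range:
  "i < h1 - 1 \<Longrightarrow> 1 \<le> u ! i \<and> u ! i \<le> l1"
  "i < h2 - 1 \<Longrightarrow> 1 \<le> v ! i \<and> v ! i \<le> l1"
  "i < l2 - 2 \<Longrightarrow> 1 \<le> w ! i \<and> w ! i \<le> l1"
proof -
  assume "i < h1 - 1"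
  then have "u ! i \<in> set u" using rank_triple(1) by simp
  then show "1 \<le> u ! i \<and> u ! i \<le> l1" using rank_triple(3) by auto
next
  assume "i < h2 - 1"
  then have "v ! i \<in> set v" using rank_triple(4) by simp
  then show "1 \<le> v ! i \<and> v ! i \<le> l1" using rank_triple(6) by auto
next
  assume "i < l2 - 2"
  then have "w ! i \<in> set w" using rank_triple(7) by simp
  then show "1 \<le> w ! i \<and> w ! i \<le> l1" using rank_triple(9) by auto
qed

lemma rank_triple_row1_above: "i < l2 - 2 \<Longrightarrow> v ! 0 < w ! i"
proof -
  assume "i < l2 - 2"
  then have "w ! i \<in> set w" using rank_triple(7) by simp
  moreover have "hd v = v ! 0" using rank_triple(4) two_le_h2 by (cases v) auto
  ultimately show ?thesis using rank_triple(11) by auto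
qed

lemma rank_triple_base: "1 \<le> u ! 0" "u ! 0 < v ! 0"
  using rank_triple_nth_range(1)[of 0] rank_triple(10)[of 0] h2_le_h1 two_le_h2 by auto

lemma code_entry_range: "x \<in> upper_boxes \<Longrightarrow> snd x < code_entry (u, v, w) x \<and> code_entry (u, v, w) x \<le> l1"
proof (erule upper_box_cases)
  fix j assume "x = (j, 0)" "0 < j" "j < h1"
  moreover have "1 \<le> u ! (j - 1) \<and> u ! (j - 1) \<le> l1"
    using rank_triple_nth_range(1) calculation by simp
  ultimately show ?thesis using code_entry_col0 by simp
next
  fix j assume x: "x = (j, 1)" "0 < j" "j < h2"
  have "v ! 0 \<le> v ! (j - 1)" using sorted_nth_mono[OF rank_triple(5), of 0 "j - 1"] rank_triple(4) x by simp
  then show ?thesis using x rank_triple_nth_range(2)[of "j - 1"] rank_triple_base code_entry_col1 by simp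
next
  fix c assume x: "x = (1, c)" "2 \<le> c" "c < l2"
  have "w ! 0 + (c - 2) \<le> w ! (c - 2)"
    using sorted_wrt_less_nth_gap[OF rank_triple(8), of "c - 2"] rank_triple(7) x by simp
  moreover have "v ! 0 < w ! 0" using rank_triple_row1_above[of 0] x by simp
  ultimately show ?thesis
    using x rank_triple_nth_range(3)[of "c - 2"] rank_triple_base code_entry_row1 by simp
qed

lemma code_entry_row_less:
  assumes y: "(j, c') \<in> upper_boxes" and "c < c'"
  shows "code_entry (u, v, w) (j, c) < code_entry (u, v, w) (j, c')"
  using y
proof (cases rule: upper_box_cases)
  case 2
  then have "u ! (j - 1) < v ! (j - 1)" using rank_triple(10)[of "j - 1"] by simp
  then show ?thesis using 2 \<open>c < c'\<close> code_entry_col0 code_entry_col1 by simp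
next
  case (3 d)
  then have "j = 1" "2 \<le> c'" "c' < l2" by auto
  then have w: "code_entry (u, v, w) (j, c') = w ! (c' - 2)" "v ! 0 < w ! (c' - 2)"
    using code_entry_row1 rank_triple_row1_above[of "c' - 2"] by auto
  consider "c = 0" | "c = 1" | "2 \<le> c" by linarith
  then show ?thesis
  proof cases
    case 3
    then show ?thesis using sorted_wrt_nth_less[OF rank_triple(8), of "c - 2" "c' - 2"]
      rank_triple(7) w(1) code_entry_row1 \<open>c < c'\<close> \<open>c' < l2\<close> by simp
  qed (use w rank_triple_base \<open>j = 1\<close> code_entry_col0 code_entry_col1 in simp_all)
qed (use \<open>c < c'\<close> in simp)

lemma code_entry_col_mono:
  assumes y: "(j', c) \<in> upper_boxes" and "0 < j" "j \<le> j'"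
  shows "code_entry (u, v, w) (j, c) \<le> code_entry (u, v, w) (j', c)"
  using y
proof (cases rule: upper_box_cases)
  case 1
  then show ?thesis using sorted_nth_mono[OF rank_triple(2), of "j - 1" "j' - 1"] rank_triple(1)
    assms code_entry_col0 by simp
next
  case 2
  then show ?thesis using sorted_nth_mono[OF rank_triple(5), of "j - 1" "j' - 1"] rank_triple(4)
    assms code_entry_col1 by simp
next
  case 3
  then have "j = j'" using assms by simp
  then show ?thesis by simp
qed

lemma code_entry_rank_function: "rank_function (code_entry (u, v, w))"
  unfolding rank_function_def using code_entry_range code_entry_row_less code_entry_col_mono by blast

end


text \<open>The inverse of the rank code: the upper boxes receive the values \<open>2, 3, \<dots>\<close> in order of
  increasing rank, ties broken by row, and the bottom box in column \<open>c\<close> receives one more than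
  the number of upper boxes of rank at most \<open>c\<close>.\<close>
definition upper_value :: "(nat \<times> nat \<Rightarrow> nat) \<Rightarrow> nat \<times> nat \<Rightarrow> nat" where
  "upper_value P x = 1 + card {y \<in> upper_boxes. precedes P y x}"

definition row0_value :: "(nat \<times> nat \<Rightarrow> nat) \<Rightarrow> nat \<Rightarrow> nat" where
  "row0_value P c = 1 + card {y \<in> upper_boxes. P y \<le> c}"

definition tableau_of_ranks :: "(nat \<times> nat \<Rightarrow> nat) \<Rightarrow> nat \<times> nat \<Rightarrow> nat" where
  "tableau_of_ranks P = (\<lambda>(j, c). if (j, c) \<notin> boxes shape then 0
     else if j = 0 then row0_value P c else upper_value P (j, c))"

lemma tableau_of_ranks_outside: "(j, c) \<notin> boxes shape \<Longrightarrow> tableau_of_ranks P (j, c) = 0"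
  and tableau_of_ranks_row0: "c < l1 \<Longrightarrow> tableau_of_ranks P (0, c) = row0_value P c"
  by (simp_all add: tableau_of_ranks_def)

lemma tableau_of_ranks_upper: "x \<in> upper_boxes \<Longrightarrow> tableau_of_ranks P x = upper_value P x"
  by (cases x) (simp add: tableau_of_ranks_def)

lemma row0_value_mono: "c \<le> c' \<Longrightarrow> row0_value P c \<le> row0_value P c'"
  unfolding row0_value_def by (auto intro!: card_mono simp: finite_upper_boxes)

lemma row0_value_le: "row0_value P c \<le> max_entry"
proof -
  have "card {y \<in> upper_boxes. P y \<le> c} \<le> card upper_boxes" by (rule card_mono[OF finite_upper_boxes]) blast
  then show ?thesis using card_upper_boxes three_le_max_entry by (simp add: row0_value_def)
qed

lemma upper_value_le_row0_value: "P x \<le> c \<Longrightarrow> upper_value P x \<le> row0_value P c"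
  unfolding row0_value_def upper_value_def precedes_def
  by (auto intro!: card_mono simp: finite_upper_boxes)

lemma row0_value_less_upper_value:
  assumes x: "x \<in> upper_boxes" and c: "c < P x"
  shows "row0_value P c < upper_value P x"
proof -
  have "{y \<in> upper_boxes. P y \<le> c} \<subseteq> {y \<in> upper_boxes. precedes P y x}" using c by (auto simp: precedes_def)
  moreover have "x \<in> {y \<in> upper_boxes. precedes P y x}" "x \<notin> {y \<in> upper_boxes. P y \<le> c}"
    using x c by auto
  ultimately have "{y \<in> upper_boxes. P y \<le> c} \<subset> {y \<in> upper_boxes. precedes P y x}" by blast
  then show ?thesis unfolding row0_value_def upper_value_def
    by (simp add: psubset_card_mono finite_upper_boxes)
qed

context
  fixes P
  assumes P: "rank_function P"
begin

lemma rank_function_range: "x \<in> upper_boxes \<Longrightarrow> snd x < P x \<and> P x \<le> l1"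
  and rank_function_row_less: "(j, c') \<in> upper_boxes \<Longrightarrow> c < c' \<Longrightarrow> P (j, c) < P (j, c')"
  and rank_function_col_mono: "(j', c) \<in> upper_boxes \<Longrightarrow> 0 < j \<Longrightarrow> j \<le> j' \<Longrightarrow> P (j, c) \<le> P (j', c)"
  using P by (auto simp: rank_function_def)

lemma precedes_antisym:
  assumes x: "x \<in> upper_boxes" and y: "y \<in> upper_boxes" and "precedes P x y" "precedes P y x"
  shows "x = y"
proof -
  have eq: "P x = P y" "fst x = fst y" using assms(3,4) by (auto simp: precedes_def)
  obtain j c c' where "x = (j, c)" "y = (j, c')" using eq(2) by (cases x, cases y) auto
  then show ?thesis
    using rank_function_row_less[of j c c'] rank_function_row_less[of j c' c] x y eq(1)
    by (cases c c' rule: linorder_cases) auto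
qed

lemma upper_value_less:
  assumes x: "x \<in> upper_boxes" and y: "y \<in> upper_boxes" and "precedes P y x" "y \<noteq> x"
  shows "upper_value P y < upper_value P x"
proof -
  have "{z \<in> upper_boxes. precedes P z y} \<subseteq> {z \<in> upper_boxes. precedes P z x}"
    using assms(3) precedes_trans by blast
  moreover have "x \<in> {z \<in> upper_boxes. precedes P z x}" "x \<notin> {z \<in> upper_boxes. precedes P z y}"
    using x precedes_antisym[OF x y _ assms(3)] assms(4) by auto
  ultimately have "{z \<in> upper_boxes. precedes P z y} \<subset> {z \<in> upper_boxes. precedes P z x}" by blast
  then show ?thesis unfolding upper_value_def by (simp add: psubset_card_mono finite_upper_boxes)
qed

lemma upper_value_le_iff:
  assumes x: "x \<in> upper_boxes" and y: "y \<in> upper_boxes"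
  shows "upper_value P y \<le> upper_value P x \<longleftrightarrow> precedes P y x"
proof
  assume "precedes P y x"
  then have "{z \<in> upper_boxes. precedes P z y} \<subseteq> {z \<in> upper_boxes. precedes P z x}"
    using precedes_trans by blast
  then show "upper_value P y \<le> upper_value P x"
    unfolding upper_value_def by (simp add: card_mono finite_upper_boxes)
next
  assume le: "upper_value P y \<le> upper_value P x"
  show "precedes P y x"
  proof (rule ccontr)
    assume "\<not> precedes P y x"
    then have "precedes P x y" "x \<noteq> y" using precedes_total[of P x y] by auto
    then show False using upper_value_less[OF y x] le by simp
  qed
qed

lemma inj_on_upper_value: "inj_on (upper_value P) upper_boxes"
proof (rule inj_onI)
  fix x y assume x: "x \<in> upper_boxes" and y: "y \<in> upper_boxes" and "upper_value P x = upper_value P y"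
  then have "precedes P x y" "precedes P y x"
    using upper_value_le_iff[OF x y] upper_value_le_iff[OF y x] by simp_all
  then show "x = y" by (rule precedes_antisym[OF x y])
qed

lemma upper_value_range: "x \<in> upper_boxes \<Longrightarrow> 2 \<le> upper_value P x \<and> upper_value P x \<le> max_entry"
proof -
  assume x: "x \<in> upper_boxes"
  have "x \<in> {z \<in> upper_boxes. precedes P z x}" using x by simp
  moreover have "finite {z \<in> upper_boxes. precedes P z x}" using finite_upper_boxes by simp
  ultimately have "0 < card {z \<in> upper_boxes. precedes P z x}" using card_gt_0_iff by blast
  moreover have "card {z \<in> upper_boxes. precedes P z x} \<le> card upper_boxes"
    by (rule card_mono[OF finite_upper_boxes]) blast
  ultimately show ?thesis using card_upper_boxes three_le_max_entry by (simp add: upper_value_def)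
qed

lemma image_upper_value: "upper_value P ` upper_boxes = {2..max_entry}"
proof (rule card_subset_eq)
  show "upper_value P ` upper_boxes \<subseteq> {2..max_entry}" using upper_value_range by auto
  show "card (upper_value P ` upper_boxes) = card {2..max_entry}"
    using card_image[OF inj_on_upper_value] card_upper_boxes three_le_max_entry by simp
qed simp

lemma tableau_of_ranks_SSYT: "is_SSYT shape (tableau_of_ranks P)"
  unfolding is_SSYT_def
proof (intro conjI allI impI ballI)
  fix b assume b: "b \<in> boxes shape"
  obtain j c where jc: "b = (j, c)" by (cases b)
  show "1 \<le> tableau_of_ranks P b"
  proof (cases "j = 0")
    case True
    then show ?thesis using b jc tableau_of_ranks_row0 by (simp add: row0_value_def)
  next
    case False
    then have "b \<in> upper_boxes" using b jc by simp
    then show ?thesis using tableau_of_ranks_upper upper_value_range by fastforce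
  qed
next
  fix j c assume a: "(j, c) \<in> boxes shape \<and> (j, Suc c) \<in> boxes shape"
  show "tableau_of_ranks P (j, c) \<le> tableau_of_ranks P (j, Suc c)"
  proof (cases "j = 0")
    case True
    then show ?thesis using a tableau_of_ranks_row0 row0_value_mono by simp
  next
    case False
    then have u: "(j, c) \<in> upper_boxes" "(j, Suc c) \<in> upper_boxes" using a by auto
    then have "precedes P (j, c) (j, Suc c)" using rank_function_row_less by (simp add: precedes_def)
    then show ?thesis using upper_value_le_iff[OF u(2,1)] tableau_of_ranks_upper u by simp
  qed
next
  fix j c assume a: "(j, c) \<in> boxes shape \<and> (Suc j, c) \<in> boxes shape"
  show "tableau_of_ranks P (j, c) < tableau_of_ranks P (Suc j, c)"
  proof (cases "j = 0")
    case True
    then have u: "(1, c) \<in> upper_boxes" and "c < l1" using a by auto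
    then have "row0_value P c < upper_value P (1, c)"
      using row0_value_less_upper_value rank_function_range[OF u] by simp
    then show ?thesis using True \<open>c < l1\<close> tableau_of_ranks_row0 tableau_of_ranks_upper[OF u] by simp
  next
    case False
    then have u: "(j, c) \<in> upper_boxes" "(Suc j, c) \<in> upper_boxes" using a by auto
    then have "precedes P (j, c) (Suc j, c)"
      using rank_function_col_mono[OF u(2)] False by (simp add: precedes_def le_less)
    then show ?thesis using upper_value_less[OF u(2) u(1)] tableau_of_ranks_upper u by simp
  qed
next
  fix b assume "b \<notin> boxes shape"
  then show "tableau_of_ranks P b = 0" using tableau_of_ranks_outside by (cases b) simp
qed

lemma tableau_of_ranks_le: "b \<in> boxes shape \<Longrightarrow> tableau_of_ranks P b \<le> max_entry"
proof -
  assume b: "b \<in> boxes shape"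
  obtain j c where jc: "b = (j, c)" by (cases b)
  show ?thesis
  proof (cases "j = 0")
    case True
    then show ?thesis using b jc tableau_of_ranks_row0 row0_value_le by simp
  next
    case False
    then have "b \<in> upper_boxes" using b jc by simp
    then show ?thesis using tableau_of_ranks_upper upper_value_range by fastforce
  qed
qed

lemma Max_tableau_of_ranks: "Max (tableau_of_ranks P ` boxes shape) = max_entry"
proof (rule Max_eqI)
  show "finite (tableau_of_ranks P ` boxes shape)" by (simp add: finite_boxes)
next
  fix y assume "y \<in> tableau_of_ranks P ` boxes shape"
  then obtain b where "b \<in> boxes shape" "y = tableau_of_ranks P b" by blast
  then show "y \<le> max_entry" using tableau_of_ranks_le by simp
next
  have "max_entry \<in> upper_value P ` upper_boxes" using three_le_max_entry by (simp add: image_upper_value)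
  then obtain x where x: "x \<in> upper_boxes" "upper_value P x = max_entry" by (metis imageE)
  then have "max_entry = tableau_of_ranks P x" using tableau_of_ranks_upper by simp
  then show "max_entry \<in> tableau_of_ranks P ` boxes shape"
    by (rule image_eqI) (rule upper_boxes_subset[OF x(1)])
qed

text \<open>The predecessor of an upper value lies weakly right of it: either in the bottom row, in
  the column just left of the rank, or in an upper box of the same rank in a lower row.\<close>
lemma first_of_rank_predecessor:
  assumes x: "x \<in> upper_boxes" and first: "\<forall>y\<in>upper_boxes. precedes P y x \<and> y \<noteq> x \<longrightarrow> P y < P x"
  shows "row0_value P (P x - 1) = upper_value P x - 1"
proof -
  have "{y \<in> upper_boxes. P y \<le> P x - 1} = {y \<in> upper_boxes. precedes P y x} - {x}"
  proof
    show "{y \<in> upper_boxes. P y \<le> P x - 1} \<subseteq> {y \<in> upper_boxes. precedes P y x} - {x}"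
      using rank_function_range[OF x] by (auto simp: precedes_def)
    show "{y \<in> upper_boxes. precedes P y x} - {x} \<subseteq> {y \<in> upper_boxes. P y \<le> P x - 1}"
      using first by auto
  qed
  moreover have "x \<in> {y \<in> upper_boxes. precedes P y x}" using x by simp
  moreover have "finite {y \<in> upper_boxes. precedes P y x}" using finite_upper_boxes by simp
  moreover have "0 < card {y \<in> upper_boxes. precedes P y x}"
    using calculation(2,3) card_gt_0_iff by blast
  ultimately show ?thesis unfolding row0_value_def upper_value_def by (simp add: card_Diff_singleton)
qed

lemma same_rank_predecessor:
  assumes x: "x \<in> upper_boxes" and y: "y \<in> upper_boxes" "precedes P y x" "y \<noteq> x" "P x \<le> P y"
  obtains x' where "x' \<in> upper_boxes" "upper_value P x' = upper_value P x - 1" "snd x \<le> snd x'"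
proof -
  have "upper_value P y < upper_value P x" "2 \<le> upper_value P y" "upper_value P x \<le> max_entry"
    using upper_value_less[OF x y(1-3)] upper_value_range y(1) x by auto
  then have "upper_value P x - 1 \<in> {2..max_entry}" by (simp, linarith)
  then have "upper_value P x - 1 \<in> upper_value P ` upper_boxes" by (simp only: image_upper_value)
  then obtain x' where x': "x' \<in> upper_boxes" "upper_value P x' = upper_value P x - 1" by (metis imageE)
  have order: "precedes P x' x" "precedes P y x'" "x' \<noteq> x"
    using upper_value_le_iff[OF x x'(1)] upper_value_le_iff[OF x'(1) y(1)] x' \<open>upper_value P y < upper_value P x\<close>
    by auto
  then have "P x' = P x" using y(4) by (auto simp: precedes_def)
  moreover have "fst x' \<noteq> fst x"
    using precedes_antisym[OF x x'(1)] order calculation by (auto simp: precedes_def)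
  ultimately have same: "P x' = P x" "fst x' < fst x" using order(1) by (auto simp: precedes_def)
  have "snd x \<le> snd x'"
  proof (rule ccontr)
    assume "\<not> snd x \<le> snd x'"
    moreover have "(fst x', snd x) \<in> upper_boxes"
      using boxes_column_closed[OF shape_antitone, of "fst x" "snd x" "fst x'"] x x'(1) same(2)
      by (cases x, cases x') auto
    ultimately have "P x' < P (fst x', snd x)"
      using rank_function_row_less[of "fst x'" "snd x" "snd x'"] by simp
    also have "\<dots> \<le> P x"
      using rank_function_col_mono[of "fst x" "snd x" "fst x'"] x x'(1) same(2) by (cases x, cases x') auto
    finally show False using same(1) by simp
  qed
  then show thesis using that x' by blast
qed

lemma tableau_of_ranks_QY: "quasi_yamanouchi shape (tableau_of_ranks P)"
  unfolding quasi_yamanouchi_def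
proof (intro allI impI)
  fix i assume i: "1 < i \<and> i \<in> tableau_of_ranks P ` boxes shape"
  then have "i \<le> max_entry" using tableau_of_ranks_le by auto
  then have "i \<in> upper_value P ` upper_boxes" using i by (simp add: image_upper_value)
  then obtain x where x: "x \<in> upper_boxes" "upper_value P x = i" by (metis imageE)
  have L: "leftmost_col shape (tableau_of_ranks P) i \<le> snd x"
    using leftmost_col_le[of "fst x" "snd x" shape "tableau_of_ranks P" i] x upper_boxes_subset
      tableau_of_ranks_upper by simp
  have "\<exists>j c. (j, c) \<in> boxes shape \<and> tableau_of_ranks P (j, c) = i - 1 \<and> snd x \<le> c"
  proof (cases "\<forall>y\<in>upper_boxes. precedes P y x \<and> y \<noteq> x \<longrightarrow> P y < P x")
    case True
    have "(0, P x - 1) \<in> boxes shape" "snd x \<le> P x - 1" using rank_function_range[OF x(1)] by auto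
    then show ?thesis using first_of_rank_predecessor[OF x(1) True] tableau_of_ranks_row0 x(2) by fastforce
  next
    case False
    then obtain y where "y \<in> upper_boxes" "precedes P y x" "y \<noteq> x" "P x \<le> P y" by auto
    then obtain x' where "x' \<in> upper_boxes" "upper_value P x' = i - 1" "snd x \<le> snd x'"
      using same_rank_predecessor[OF x(1)] x(2) by blast
    then show ?thesis using tableau_of_ranks_upper upper_boxes_subset by (metis prod.collapse)
  qed
  then show "\<exists>j c. (j, c) \<in> boxes shape \<and> tableau_of_ranks P (j, c) = i - 1
      \<and> leftmost_col shape (tableau_of_ranks P) i \<le> c"
    using L by (meson order_trans)
qed

lemma tableau_of_ranks_in: "tableau_of_ranks P \<in> QYT_eq max_entry shape"
  using tableau_of_ranks_SSYT tableau_of_ranks_QY Max_tableau_of_ranks by (simp add: QYT_eq_def)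

lemma rank_tableau_of_ranks:
  assumes x: "x \<in> upper_boxes"
  shows "rank (tableau_of_ranks P) x = P x"
proof -
  have "{c. c < l1 \<and> tableau_of_ranks P (0, c) < tableau_of_ranks P x} = {..<P x}"
  proof (intro set_eqI iffI)
    fix c assume "c \<in> {c. c < l1 \<and> tableau_of_ranks P (0, c) < tableau_of_ranks P x}"
    then have "c < l1" "row0_value P c < upper_value P x"
      using tableau_of_ranks_row0 tableau_of_ranks_upper[OF x] by auto
    then show "c \<in> {..<P x}" using upper_value_le_row0_value[of P x c] by fastforce
  next
    fix c assume "c \<in> {..<P x}"
    then have "c < P x" "c < l1" using rank_function_range[OF x] by auto
    then show "c \<in> {c. c < l1 \<and> tableau_of_ranks P (0, c) < tableau_of_ranks P x}"
      using row0_value_less_upper_value[OF x] tableau_of_ranks_row0 tableau_of_ranks_upper[OF x] by simp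
  qed
  then show ?thesis by (simp add: rank_def)
qed

end


lemma code_entry_rank_code:
  assumes x: "x \<in> upper_boxes"
  shows "code_entry (rank_code T) x = rank T x"
  using x
proof (cases rule: upper_box_cases)
  case (1 j)
  then have "[1..<h1] ! (j - 1) = j" by simp
  then show ?thesis using 1 by (simp add: code_entry_def rank_code_def)
next
  case (2 j)
  then have "[1..<h2] ! (j - 1) = j" by simp
  then show ?thesis using 2 by (simp add: code_entry_def rank_code_def)
next
  case (3 c)
  then have "[2..<l2] ! (c - 2) = c" by simp
  then show ?thesis using 3 by (simp add: code_entry_def rank_code_def)
qed

lemma rank_code_tableau_of_ranks:
  assumes uvw: "(u, v, w) \<in> compatible_triples (h1 - 1) (h2 - 1) (l2 - 2) l1"
  shows "rank_code (tableau_of_ranks (code_entry (u, v, w))) = (u, v, w)"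
proof -
  note rank = rank_tableau_of_ranks[OF code_entry_rank_function[OF uvw]]
  have "map (\<lambda>j. rank (tableau_of_ranks (code_entry (u, v, w))) (j, 0)) [1..<h1] = u"
    by (rule nth_equalityI) (simp_all add: rank_triple(1)[OF uvw] rank code_entry_col0)
  moreover have "map (\<lambda>j. rank (tableau_of_ranks (code_entry (u, v, w))) (j, 1)) [1..<h2] = v"
    by (rule nth_equalityI) (simp_all add: rank_triple(4)[OF uvw] rank code_entry_col1)
  moreover have "map (\<lambda>c. rank (tableau_of_ranks (code_entry (u, v, w))) (1, c)) [2..<l2] = w"
    by (rule nth_equalityI) (simp_all add: rank_triple(7)[OF uvw] rank code_entry_row1)
  ultimately show ?thesis by (simp add: rank_code_def)
qed

lemma card_upper_boxes_le:
  assumes T: "T \<in> QYT_eq max_entry shape" and s: "s \<le> max_entry"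
  shows "card {x \<in> upper_boxes. T x \<le> s} = s - 1"
proof -
  have "T ` {x \<in> upper_boxes. T x \<le> s} = {2..s}"
  proof
    show "T ` {x \<in> upper_boxes. T x \<le> s} \<subseteq> {2..s}" using upper_entry_range[OF T] by auto
    show "{2..s} \<subseteq> T ` {x \<in> upper_boxes. T x \<le> s}"
    proof
      fix r assume r: "r \<in> {2..s}"
      then have "r \<in> T ` upper_boxes" using image_upper_boxes[OF T] s by auto
      then obtain x where "x \<in> upper_boxes" "T x = r" by (metis imageE)
      then show "r \<in> T ` {x \<in> upper_boxes. T x \<le> s}" using r by auto
    qed
  qed
  moreover have "inj_on T {x \<in> upper_boxes. T x \<le> s}"
    using inj_on_upper_boxes[OF T] by (rule inj_on_subset) auto
  ultimately have "card {x \<in> upper_boxes. T x \<le> s} = card {2..s}" by (metis card_image)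
  then show ?thesis by simp
qed

lemma rank_le_iff:
  assumes T: "T \<in> QYT_eq max_entry shape" and c: "c < l1"
  shows "rank T x \<le> c \<longleftrightarrow> T x \<le> T (0, c)"
proof
  assume le: "rank T x \<le> c"
  show "T x \<le> T (0, c)"
  proof (rule ccontr)
    assume "\<not> T x \<le> T (0, c)"
    then have lt: "T (0, c) < T x" by simp
    have "{..c} \<subseteq> {c'. c' < l1 \<and> T (0, c') < T x}"
    proof
      fix c' assume "c' \<in> {..c}"
      then have "T (0, c') \<le> T (0, c)" using SSYT_row_mono[OF QYT_eq_SSYT[OF T]] c by simp
      then show "c' \<in> {c'. c' < l1 \<and> T (0, c') < T x}" using lt c \<open>c' \<in> {..c}\<close> by simp
    qed
    then have "card {..c} \<le> rank T x" unfolding rank_def by (rule card_mono[rotated]) simp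
    then show False using le by simp
  qed
next
  assume le: "T x \<le> T (0, c)"
  have "{c'. c' < l1 \<and> T (0, c') < T x} \<subseteq> {..<c}"
  proof
    fix c' assume c': "c' \<in> {c'. c' < l1 \<and> T (0, c') < T x}"
    show "c' \<in> {..<c}"
    proof (rule ccontr)
      assume "c' \<notin> {..<c}"
      then have "T (0, c) \<le> T (0, c')" using SSYT_row_mono[OF QYT_eq_SSYT[OF T]] c' by simp
      then show False using le c' by simp
    qed
  qed
  then have "rank T x \<le> card {..<c}" unfolding rank_def by (rule card_mono[rotated]) simp
  then show "rank T x \<le> c" by simp
qed

lemma precedes_rank_if_le:
  assumes T: "T \<in> QYT_eq max_entry shape" and x: "x \<in> upper_boxes" and y: "y \<in> upper_boxes"
    and le: "T y \<le> T x"
  shows "precedes (rank T) y x"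
proof (cases "y = x")
  case False
  then have lt: "T y < T x" using le inj_onD[OF inj_on_upper_boxes[OF T] _ y x] by fastforce
  have "fst y \<le> fst x" if same_rank: "rank T y = rank T x"
  proof (rule ccontr)
    assume "\<not> fst y \<le> fst x"
    then have below: "fst x < fst y" by simp
    show False
    proof (cases "snd x \<le> snd y")
      case True
      have y_box: "(fst y, snd y) \<in> boxes shape" using upper_boxes_subset[OF y] by simp
      then have "(fst x, snd y) \<in> boxes shape"
        using boxes_column_closed[OF shape_antitone] below by (meson less_imp_le)
      then have "T (fst x, snd x) \<le> T (fst x, snd y)"
        using SSYT_row_mono[OF QYT_eq_SSYT[OF T]] True by blast
      also have "\<dots> < T (fst y, snd y)" using SSYT_col_less[OF QYT_eq_SSYT[OF T] shape_antitone y_box below] .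
      finally show False using lt by simp
    next
      case False
      then show False using rank_less[OF T y x _ lt] same_rank by simp
    qed
  qed
  then show ?thesis using rank_mono[OF le] by (auto simp: precedes_def le_less)
qed simp

lemma le_iff_precedes_rank:
  assumes T: "T \<in> QYT_eq max_entry shape" and x: "x \<in> upper_boxes" and y: "y \<in> upper_boxes"
  shows "T y \<le> T x \<longleftrightarrow> precedes (rank T) y x"
proof
  assume "precedes (rank T) y x"
  show "T y \<le> T x"
  proof (rule ccontr)
    assume "\<not> T y \<le> T x"
    then have "precedes (rank T) x y" using precedes_rank_if_le[OF T y x] by simp
    with \<open>precedes (rank T) y x\<close> have same: "rank T x = rank T y" "fst x = fst y"
      by (auto simp: precedes_def)
    then obtain j c c' where xy: "x = (j, c)" "y = (j, c')" by (cases x, cases y) auto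
    show False
    proof (cases c c' rule: linorder_cases)
      case less
      then show False using rank_row_less[OF T] x y xy same(1) by fastforce
    next
      case greater
      then have "T y \<le> T x"
        using SSYT_row_mono[OF QYT_eq_SSYT[OF T]] upper_boxes_subset[OF x] xy by simp
      then show False using \<open>\<not> T y \<le> T x\<close> by simp
    qed (use xy \<open>\<not> T y \<le> T x\<close> in simp)
  qed
qed (rule precedes_rank_if_le[OF T x y])

lemma tableau_of_ranks_eq:
  assumes T: "T \<in> QYT_eq max_entry shape" and P: "\<And>x. x \<in> upper_boxes \<Longrightarrow> P x = rank T x"
  shows "tableau_of_ranks P = T"
proof
  fix b :: "nat \<times> nat"
  obtain j c where b: "b = (j, c)" by (cases b)
  have "tableau_of_ranks P (j, c) = T (j, c)"
  proof (cases "(j, c) \<in> boxes shape")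
    case False
    then show ?thesis using QYT_eq_SSYT[OF T] tableau_of_ranks_outside by (simp add: is_SSYT_def)
  next
    case True
    show ?thesis
    proof (cases "j = 0")
      case j0: True
      then have c: "c < l1" using True by simp
      have "{y \<in> upper_boxes. P y \<le> c} = {y \<in> upper_boxes. T y \<le> T (0, c)}"
        using P rank_le_iff[OF T c] by auto
      then show ?thesis using tableau_of_ranks_row0[OF c] card_upper_boxes_le[OF T]
        QYT_eq_entry_range[OF T True] j0 by (simp add: row0_value_def)
    next
      case False
      then have x: "(j, c) \<in> upper_boxes" using True by simp
      have "{y \<in> upper_boxes. precedes P y (j, c)} = {y \<in> upper_boxes. T y \<le> T (j, c)}"
        using P[OF x] P le_iff_precedes_rank[OF T x] by (auto simp: precedes_def)
      then show ?thesis using tableau_of_ranks_upper[OF x] card_upper_boxes_le[OF T]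
        upper_entry_range[OF T x] by (simp add: upper_value_def)
    qed
  qed
  then show "tableau_of_ranks P b = T b" using b by simp
qed

lemma card_QYT_max_entry:
  "card (QYT_eq max_entry shape) = card (compatible_triples (h1 - 1) (h2 - 1) (l2 - 2) l1)"
proof (rule bij_betw_same_card[OF bij_betw_byWitness[where f' = "\<lambda>t. tableau_of_ranks (code_entry t)"]])
  show "\<forall>T\<in>QYT_eq max_entry shape. tableau_of_ranks (code_entry (rank_code T)) = T"
    using tableau_of_ranks_eq code_entry_rank_code by blast
  show "\<forall>t\<in>compatible_triples (h1 - 1) (h2 - 1) (l2 - 2) l1. rank_code (tableau_of_ranks (code_entry t)) = t"
    using rank_code_tableau_of_ranks by auto
  show "rank_code ` QYT_eq max_entry shape \<subseteq> compatible_triples (h1 - 1) (h2 - 1) (l2 - 2) l1"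
    using rank_code_in by auto
  show "(\<lambda>t. tableau_of_ranks (code_entry t)) ` compatible_triples (h1 - 1) (h2 - 1) (l2 - 2) l1
      \<subseteq> QYT_eq max_entry shape"
    using tableau_of_ranks_in[OF code_entry_rank_function] by auto
qed


end

context hook_partition
begin

lemma real_card_QYT_first_column: "real (card (QYT_eq h1 shape)) = hook_QYT_formula l1 l2 h1 h2 h1"
proof -
  have "l2 - 1 = Suc (l2 - 2)" using two_le_l2 by simp
  then have "real (card (QYT_eq h1 shape)) = triple_count (l1 - 1) (l2 - 2) (h2 - 2) h1"
    using card_QYT_first_column real_card_compatible_triples[of "l2 - 2" "l1 - 1" "h2 - 2" h1]
      l2_le_l1 two_le_l2 h2_le_h1 two_le_h2 by simp
  then show ?thesis
    using triple_count_eq_formula_first_column[OF l2_le_l1 two_le_l2 h2_le_h1 two_le_h2] by simp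
qed

lemma real_card_QYT_max_entry: "real (card (QYT_eq max_entry shape)) = hook_QYT_formula l1 l2 h1 h2 max_entry"
proof -
  have "h2 - 1 = Suc (h2 - 2)" using two_le_h2 by simp
  then have "real (card (QYT_eq max_entry shape)) = triple_count (h1 - 1) (h2 - 2) (l2 - 2) l1"
    using card_QYT_max_entry real_card_compatible_triples[of "h2 - 2" "h1 - 1" "l2 - 2" l1]
      l2_le_l1 two_le_l2 h2_le_h1 two_le_h2 by simp
  then show ?thesis
    using triple_count_eq_formula_max[OF l2_le_l1 two_le_l2 h2_le_h1 two_le_h2] by (simp add: max_entry_def)
qed

end

theorem lemma4p3:
  fixes l1 l2 h1 h2 n m :: nat
  assumes "l1 \<ge> l2" and "l2 \<ge> 2" and "h1 \<ge> h2" and "h2 \<ge> 2"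
    and "n = l1 + l2 + h1 + h2 - 4"
    and "m = h1 \<or> m = n - (l1 - 1)"
  shows "real (card (QYT_eq m (hook_shape l1 l2 h1 h2))) =
    (real (l1 - l2 + 1) / real (m - h2 + 1))
    * real ((l1 + h1 - 2) choose (m - h2))
    * real ((l2 + h1 - 3) choose (m - h2))
    * real ((m - h2) choose (m - h1))
    * real ((l2 + h2 - 4) choose (h2 - 2))
    * real ((l1 + h2 - 3) choose (h2 - 2))
    * (1 / real ((h1 - 1) choose (h2 - 2)))"
proof -
  interpret hook_partition l1 l2 h1 h2
    using assms(1-4) by unfold_locales
  have "m = h1 \<or> m = max_entry"
    using assms by (auto simp: max_entry_def)
  then have "real (card (QYT_eq m shape)) = hook_QYT_formula l1 l2 h1 h2 m"
    using real_card_QYT_first_column real_card_QYT_max_entry by blast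
  then show ?thesis by (simp add: hook_QYT_formula_def)
qed

end
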